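(* Let $B$ satisfy the standing assumptions below with constant $C_B$, let $T>0$ and $\xi,\xi'\in C([0,T];\mathcal{M}_w)$. Then the flow $\varphi^{t,B(\xi)}:\mathbb{R}^d\to\mathbb{R}^d$ is twice differentiable and, for all $t\in[0,T]$, $$\|D\varphi^{t,B(\xi)}\|_\infty\le e^{C_BT(\|\xi\|_T+1)},$$ $$\|\varphi^{t,B(\xi)}-\varphi^{t,B(\xi')}\|_\infty\le C_BTe^{C_BT(\|\xi\|_T+1)}\|\xi-\xi'\|_T,$$ $$\|D\varphi^{t,B(\xi)}-D\varphi^{t,B(\xi')}\|_\infty\le C_BTe^{C_B(T+1)(\|\xi\|_T+\|\xi'\|_T+2)}\left(1+C_BT(\|\xi\|_T+1)e^{C_BT(\|\xi\|_T+1)}\right)\|\xi-\xi'\|_T,$$ and for all $x,y\in\mathbb{R}^d$, $$|D\varphi^{t,B(\xi)}(x)-D\varphi^{t,B(\xi)}(y)|\le C_BT(\|\xi\|_T+1)e^{C_B(2T+1)(\|\xi\|_T+1)}|x-y|.$$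
   Context: $\mathcal{M}$ is the dual of $C_b(\mathbb{R}^d;\mathbb{R}^d)$ (bounded continuous vector fields, sup norm $\|\cdot\|_\infty$). Weak norm: $\|\xi\|=\sup\{\xi(\theta):\|\theta\|_\infty+\mathrm{Lip}(\theta)\le1\}$; $\mathcal{M}_w$ is $\mathcal{M}$ with the metric $d(\xi,\xi')=\|\xi-\xi'\|$. $C_b^2(\mathbb{R}^d,\mathbb{R}^d)$ denotes $C^2$ vector fields bounded with their first and second derivatives, with norm $\|\cdot\|_{C_b^2}$ the sum of the sup norms. Standing assumptions: $B:\mathcal{M}_w\to C_b^2(\mathbb{R}^d,\mathbb{R}^d)$ is continuous and there is $C_B>0$ such that for all $\xi,\xi'\in\mathcal{M}$: $\|B(\xi)\|_{C_b^2}\le C_B(\|\xi\|+1)$, $\|B(\xi)-B(\xi')\|_\infty\le C_B\|\xi-\xi'\|$, $\|DB(\xi)-DB(\xi')\|_\infty\le C_B\|\xi-\xi'\|$, where $D$ is the spatial derivative. For $\xi\in C([0,T];\mathcal{M}_w)$, $\varphi^{t,B(\xi)}$ denotes the flow of the ODE $\frac{dx_t}{dt}=B(\xi_t)(x_t)$, i.e. $\varphi^{0,B(\xi)}=\mathrm{id}$ and $\partial_t\varphi^{t,B(\xi)}(x)=B(\xi_t)(\varphi^{t,B(\xi)}(x))$; and $\|\xi\|_T:=\sup_{0\le t\le T}\|\xi_t\|$. *)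

theory Defs
  imports "HOL-Analysis.Analysis"
begin

text \<open>The space M: the dual of C_b(R^d;R^d) (bounded continuous vector fields with sup norm).
  R^d is modelled by an arbitrary Euclidean space 'a.\<close>
type_synonym 'a meas = "('a \<Rightarrow>\<^sub>C 'a) \<Rightarrow>\<^sub>L real"

definition Lip :: "('a::metric_space \<Rightarrow>\<^sub>C 'b::real_normed_vector) \<Rightarrow> real" where
  "Lip \<theta> = Inf {L. lipschitz_on L UNIV (apply_bcontfun \<theta>)}"

definition test_fields :: "('a::euclidean_space \<Rightarrow>\<^sub>C 'a) set" where
  "test_fields = {\<theta>. (\<exists>L. lipschitz_on L UNIV (apply_bcontfun \<theta>)) \<and> norm \<theta> + Lip \<theta> \<le> 1}"

definition wnorm :: "'a::euclidean_space meas \<Rightarrow> real" where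
  "wnorm \<xi> = (SUP \<theta>\<in>test_fields. blinfun_apply \<xi> \<theta>)"

definition sD :: "('a::real_normed_vector \<Rightarrow> 'b::real_normed_vector) \<Rightarrow> 'a \<Rightarrow> ('a \<Rightarrow>\<^sub>L 'b)" where
  "sD f x = Blinfun (frechet_derivative f (at x))"

definition supn :: "('a \<Rightarrow> 'b::real_normed_vector) \<Rightarrow> real" where
  "supn f = (SUP x. norm (f x))"

definition Cb2 :: "('a::euclidean_space \<Rightarrow> 'a) \<Rightarrow> bool" where
  "Cb2 f \<longleftrightarrow> (\<forall>x. f differentiable (at x)) \<and> (\<forall>x. sD f differentiable (at x))
     \<and> continuous_on UNIV (sD (sD f))
     \<and> bounded (range f) \<and> bounded (range (sD f)) \<and> bounded (range (sD (sD f)))"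

definition normC2 :: "('a::euclidean_space \<Rightarrow> 'a) \<Rightarrow> real" where
  "normC2 f = supn f + supn (sD f) + supn (sD (sD f))"

definition standing :: "('a::euclidean_space meas \<Rightarrow> 'a \<Rightarrow> 'a) \<Rightarrow> real \<Rightarrow> bool" where
  "standing B CB \<longleftrightarrow> CB > 0 \<and> (\<forall>\<xi>. Cb2 (B \<xi>))
     \<and> (\<forall>\<xi> \<epsilon>. \<epsilon> > 0 \<longrightarrow> (\<exists>\<delta>>0. \<forall>\<xi>'. wnorm (\<xi>' - \<xi>) < \<delta> \<longrightarrow>
             normC2 (\<lambda>x. B \<xi>' x - B \<xi> x) < \<epsilon>))
     \<and> (\<forall>\<xi>. normC2 (B \<xi>) \<le> CB * (wnorm \<xi> + 1))
     \<and> (\<forall>\<xi> \<xi>'. supn (\<lambda>x. B \<xi> x - B \<xi>' x) \<le> CB * wnorm (\<xi> - \<xi>'))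
     \<and> (\<forall>\<xi> \<xi>'. supn (\<lambda>x. sD (B \<xi>) x - sD (B \<xi>') x) \<le> CB * wnorm (\<xi> - \<xi>'))"

definition wcont :: "real \<Rightarrow> (real \<Rightarrow> 'a::euclidean_space meas) \<Rightarrow> bool" where
  "wcont T \<xi> \<longleftrightarrow> (\<forall>t\<in>{0..T}. \<forall>\<epsilon>>0. \<exists>\<delta>>0. \<forall>s\<in>{0..T}. \<bar>s - t\<bar> < \<delta> \<longrightarrow> wnorm (\<xi> s - \<xi> t) < \<epsilon>)"

definition normT :: "real \<Rightarrow> (real \<Rightarrow> 'a::euclidean_space meas) \<Rightarrow> real" where
  "normT T \<xi> = (SUP t\<in>{0..T}. wnorm (\<xi> t))"

definition is_flow :: "('m \<Rightarrow> 'a::real_normed_vector \<Rightarrow> 'a) \<Rightarrow> real \<Rightarrow> (real \<Rightarrow> 'm) \<Rightarrow> (real \<Rightarrow> 'a \<Rightarrow> 'a) \<Rightarrow> bool" where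
  "is_flow B T \<xi> \<phi> \<longleftrightarrow> (\<forall>x. \<phi> 0 x = x \<and>
     (\<forall>t\<in>{0..T}. ((\<lambda>s. \<phi> s x) has_vector_derivative B (\<xi> t) (\<phi> t x)) (at t within {0..T})))"

end

theory Submission
  imports Defs
begin

text \<open>
  Every estimate comes from one Gronwall comparison: if \<open>f(0) = 0\<close> and
  \<open>|f'| \<le> a |f| + \<beta>\<close> on \<open>[0,T]\<close>, then \<open>|f(t)| \<le> \<beta> t exp (a t)\<close>, applied with
  \<open>a = K = C\<^sub>B (\<parallel>\<xi>\<parallel>\<^sub>T + 1)\<close>, the bound on \<open>B(\<xi>\<^sub>t)\<close> in \<open>C\<^sub>b\<^sup>2\<close>.
  The candidate derivative of the flow is the solution \<open>J\<close> of the variational equation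
  \<open>J' = DB(\<xi>\<^sub>t)(\<phi>\<^sub>t x) J\<close>, \<open>J(0) = id\<close>, and the candidate derivative of \<open>J\<close> is the
  solution \<open>H\<close> of the second variational equation \<open>H' = DB H + D\<^sup>2B(J\<cdot>) J\<close>, \<open>H(0) = 0\<close>;
  both are linear ODEs in spaces of bounded linear maps, solved by Picard iteration.
  Differentiability follows because the remainders \<open>\<phi>\<^sub>t y - \<phi>\<^sub>t x - J(y - x)\<close> and
  \<open>J(y) - J(x) - H(y - x)\<close> satisfy such a differential inequality with \<open>\<beta> = o(|y - x|)\<close>,
  and the Lipschitz and stability bounds come from the same inequality for differences of
  solutions.
\<close>

section \<open>Gronwall-type comparison\<close>

lemma has_vector_derivative_backward_step:
  assumes "(f has_vector_derivative f') (at t0 within S)" "e > 0"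
  obtains d where "d > 0"
    "\<And>h. 0 < h \<Longrightarrow> h < d \<Longrightarrow> t0 - h \<in> S \<Longrightarrow> norm (f t0 - f (t0 - h) - h *\<^sub>R f') \<le> e * h"
proof -
  obtain d where "d > 0" and d: "\<forall>u\<in>S. norm (u - t0) < d \<longrightarrow> norm (f u - f t0 - (u - t0) *\<^sub>R f') \<le> e * norm (u - t0)"
    using assms unfolding has_vector_derivative_def has_derivative_within_alt by blast
  have "norm (f t0 - f (t0 - h) - h *\<^sub>R f') \<le> e * h" if "0 < h" "h < d" "t0 - h \<in> S" for h
    using d[rule_format, OF that(3)] that(1,2) by (simp add: norm_minus_commute algebra_simps)
  with \<open>d > 0\<close> show ?thesis using that by blast
qed

lemma first_nonneg_time:
  fixes g :: "real \<Rightarrow> real"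
  assumes "continuous_on {0..T} g" "t \<in> {0..T}" "0 \<le> g t"
  obtains t0 where "t0 \<in> {0..T}" "0 \<le> g t0" "\<And>u. u \<in> {0..T} \<Longrightarrow> u < t0 \<Longrightarrow> g u < 0"
proof -
  define S where "S = {0..T} \<inter> g -` {0..}"
  have "closed S" unfolding S_def using assms(1) by (intro continuous_closed_preimage) auto
  moreover have "S \<noteq> {}" "bdd_below S"
    using assms(2,3) unfolding S_def by (auto intro!: bdd_belowI[of _ 0])
  ultimately have "Inf S \<in> S" by (intro closed_contains_Inf)
  moreover have "g u < 0" if "u \<in> {0..T}" "u < Inf S" for u
    using cInf_lower[OF _ \<open>bdd_below S\<close>, of u] that unfolding S_def by force
  ultimately show ?thesis using that unfolding S_def by auto
qed

lemma norm_less_strict_comparison: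
  fixes f :: "real \<Rightarrow> 'v::real_normed_vector" and v :: "real \<Rightarrow> real"
  assumes a: "0 \<le> a"
    and fd: "\<And>t. t \<in> {0..T} \<Longrightarrow> (f has_vector_derivative f' t) (at t within {0..T})"
    and vd: "\<And>t. t \<in> {0..T} \<Longrightarrow> (v has_real_derivative v' t) (at t within {0..T})"
    and init: "norm (f 0) < v 0"
    and strict: "\<And>t. t \<in> {0..T} \<Longrightarrow> norm (f' t) < a * norm (f t) + (v' t - a * v t)"
    and t: "t \<in> {0..T}"
  shows "norm (f t) < v t"
proof (rule ccontr)
  txt \<open>At the first time \<open>t0\<close> with \<open>|f t0| \<ge> v t0\<close>, a backward difference quotient
    of \<open>|f| - v\<close> contradicts the strict inequality.\<close>
  assume "\<not> norm (f t) < v t"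
  have "continuous_on {0..T} f"
    using fd by (meson continuous_on_eq_continuous_within has_vector_derivative_continuous)
  moreover have "continuous_on {0..T} v"
    using vd by (meson DERIV_continuous continuous_on_eq_continuous_within)
  ultimately have "continuous_on {0..T} (\<lambda>s. norm (f s) - v s)" by (intro continuous_intros)
  moreover have "0 \<le> norm (f t) - v t" using \<open>\<not> norm (f t) < v t\<close> by simp
  ultimately obtain t0 where t0: "t0 \<in> {0..T}" and crossing: "0 \<le> norm (f t0) - v t0"
    and before: "\<And>u. u \<in> {0..T} \<Longrightarrow> u < t0 \<Longrightarrow> norm (f u) - v u < 0"
    using first_nonneg_time[OF _ t] by blast
  have "t0 \<noteq> 0" using crossing init by auto
  then have "t0 > 0" using t0 by simp
  define \<gamma> where "\<gamma> = a * norm (f t0) + (v' t0 - a * v t0) - norm (f' t0)"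
  have "\<gamma> > 0" using strict[OF t0] unfolding \<gamma>_def by simp
  then have "\<gamma> / 4 > 0" by simp
  obtain d1 where "d1 > 0" and d1: "\<And>h. 0 < h \<Longrightarrow> h < d1 \<Longrightarrow> t0 - h \<in> {0..T} \<Longrightarrow>
      norm (f t0 - f (t0 - h) - h *\<^sub>R f' t0) \<le> \<gamma> / 4 * h"
    using has_vector_derivative_backward_step[OF fd[OF t0] \<open>\<gamma> / 4 > 0\<close>] by blast
  obtain d2 where "d2 > 0" and d2: "\<And>h. 0 < h \<Longrightarrow> h < d2 \<Longrightarrow> t0 - h \<in> {0..T} \<Longrightarrow>
      norm (v t0 - v (t0 - h) - h *\<^sub>R v' t0) \<le> \<gamma> / 4 * h"
    using has_vector_derivative_backward_step[OF vd[OF t0, unfolded has_real_derivative_iff_has_vector_derivative]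
          \<open>\<gamma> / 4 > 0\<close>] by blast
  define h where "h = min (min d1 d2 / 2) (min t0 (1 / (a + 1)))"
  have h: "0 < h" "h < d1" "h < d2" "h \<le> t0" "h * a \<le> 1"
  proof -
    show "0 < h" "h < d1" "h < d2" "h \<le> t0"
      unfolding h_def using \<open>d1 > 0\<close> \<open>d2 > 0\<close> \<open>t0 > 0\<close> a by auto
    have "h \<le> 1 / (a + 1)" unfolding h_def by simp
    then show "h * a \<le> 1" using a \<open>0 < h\<close> by (simp add: field_simps)
  qed
  have u: "t0 - h \<in> {0..T}" "t0 - h < t0" using h t0 by auto
  have f_step: "norm (f t0) \<le> norm (f (t0 - h)) + h * norm (f' t0) + \<gamma> / 4 * h"
    using d1[OF h(1,2) u(1)] h(1) norm_triangle_ineq2[of "f t0" "f (t0 - h)"]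
      norm_triangle_ineq[of "f t0 - f (t0 - h) - h *\<^sub>R f' t0" "h *\<^sub>R f' t0"]
    by simp
  have "\<bar>v t0 - v (t0 - h) - h * v' t0\<bar> \<le> \<gamma> / 4 * h"
    using d2[OF h(1,3) u(1)] by simp
  then have v_step: "v (t0 - h) \<le> v t0 - h * v' t0 + \<gamma> / 4 * h"
    using abs_le_D2 by fastforce
  have "h * norm (f' t0) = h * a * norm (f t0) + h * v' t0 - h * a * v t0 - h * \<gamma>"
    unfolding \<gamma>_def by (simp add: algebra_simps)
  then have "(1 - h * a) * (norm (f t0) - v t0) < - h * (\<gamma> / 2)"
    using f_step v_step before[OF u] by (simp add: algebra_simps)
  moreover have "0 \<le> (1 - h * a) * (norm (f t0) - v t0)"
    using h crossing by simp
  moreover have "0 < h * (\<gamma> / 2)" using h(1) \<open>\<gamma> > 0\<close> by simp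
  ultimately show False by linarith
qed

lemma gronwall_comparison:
  fixes f :: "real \<Rightarrow> 'v::real_normed_vector" and w :: "real \<Rightarrow> real"
  assumes a: "0 \<le> a"
    and fd: "\<And>t. t \<in> {0..T} \<Longrightarrow> (f has_vector_derivative f' t) (at t within {0..T})"
    and wd: "\<And>t. t \<in> {0..T} \<Longrightarrow> (w has_real_derivative w' t) (at t within {0..T})"
    and init: "norm (f 0) \<le> w 0"
    and bound: "\<And>t. t \<in> {0..T} \<Longrightarrow> norm (f' t) \<le> a * norm (f t) + (w' t - a * w t)"
    and t: "t \<in> {0..T}"
  shows "norm (f t) \<le> w t"
proof (rule field_le_epsilon)
  txt \<open>Adding \<open>\<epsilon> exp ((a + 1) t)\<close> to \<open>w\<close> makes the differential inequality strict.\<close>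
  fix \<epsilon> :: real assume "\<epsilon> > 0"
  define c where "c = \<epsilon> / exp ((a + 1) * t)"
  have "c > 0" using \<open>\<epsilon> > 0\<close> unfolding c_def by simp
  have "norm (f t) < w t + c * exp ((a + 1) * t)"
  proof (rule norm_less_strict_comparison[where v="\<lambda>s. w s + c * exp ((a + 1) * s)", OF a fd _ _ _ t])
    fix s assume s: "s \<in> {0..T}"
    show "((\<lambda>s. w s + c * exp ((a + 1) * s)) has_real_derivative
        w' s + c * ((a + 1) * exp ((a + 1) * s))) (at s within {0..T})"
      using wd[OF s] by (auto intro!: derivative_eq_intros)
    show "norm (f' s) < a * norm (f s) + (w' s + c * ((a + 1) * exp ((a + 1) * s))
        - a * (w s + c * exp ((a + 1) * s)))"
      using bound[OF s] mult_pos_pos[OF \<open>c > 0\<close> exp_gt_zero[of "(a + 1) * s"]]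
      by (simp add: algebra_simps)
  next
    show "norm (f 0) < w 0 + c * exp ((a + 1) * 0)" using init \<open>c > 0\<close> by simp
  qed
  then show "norm (f t) \<le> w t + \<epsilon>" unfolding c_def by simp
qed

lemma gronwall_affine:
  fixes f :: "real \<Rightarrow> 'v::real_normed_vector"
  assumes a: "0 \<le> a" and \<beta>: "0 \<le> \<beta>"
    and fd: "\<And>t. t \<in> {0..T} \<Longrightarrow> (f has_vector_derivative f' t) (at t within {0..T})"
    and f0: "f 0 = 0"
    and bound: "\<And>t. t \<in> {0..T} \<Longrightarrow> norm (f' t) \<le> a * norm (f t) + \<beta>"
    and t: "t \<in> {0..T}"
  shows "norm (f t) \<le> \<beta> * t * exp (a * t)"
proof (rule gronwall_comparison[where w' = "\<lambda>t. \<beta> * exp (a * t) + \<beta> * t * (a * exp (a * t))",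
      OF a fd _ _ _ t])
  fix s assume s: "s \<in> {0..T}"
  show "((\<lambda>t. \<beta> * t * exp (a * t)) has_real_derivative \<beta> * exp (a * s) + \<beta> * s * (a * exp (a * s)))
      (at s within {0..T})"
    by (auto intro!: derivative_eq_intros)
  have "\<beta> \<le> \<beta> * exp (a * s)" using s a \<beta> by (simp add: mult_le_cancel_left1)
  then show "norm (f' s) \<le> a * norm (f s)
      + (\<beta> * exp (a * s) + \<beta> * s * (a * exp (a * s)) - a * (\<beta> * s * exp (a * s)))"
    using bound[OF s] by (simp add: algebra_simps)
next
  show "norm (f 0) \<le> \<beta> * 0 * exp (a * 0)" using f0 by simp
qed

lemma gronwall_linear:
  fixes f :: "real \<Rightarrow> 'v::real_normed_vector"
  assumes a: "0 \<le> a"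
    and fd: "\<And>t. t \<in> {0..T} \<Longrightarrow> (f has_vector_derivative f' t) (at t within {0..T})"
    and f0: "norm (f 0) \<le> c"
    and bound: "\<And>t. t \<in> {0..T} \<Longrightarrow> norm (f' t) \<le> a * norm (f t)"
    and t: "t \<in> {0..T}"
  shows "norm (f t) \<le> c * exp (a * t)"
proof (rule gronwall_comparison[where w' = "\<lambda>t. c * (a * exp (a * t))", OF a fd _ _ _ t])
  fix s assume s: "s \<in> {0..T}"
  show "((\<lambda>t. c * exp (a * t)) has_real_derivative c * (a * exp (a * s))) (at s within {0..T})"
    by (auto intro!: derivative_eq_intros)
  show "norm (f' s) \<le> a * norm (f s) + (c * (a * exp (a * s)) - a * (c * exp (a * s)))"
    using bound[OF s] by (simp add: algebra_simps)
next
  show "norm (f 0) \<le> c * exp (a * 0)" using f0 by simp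
qed

lemma gronwall_exp_source:
  fixes f :: "real \<Rightarrow> 'v::real_normed_vector"
  assumes a: "0 \<le> a"
    and fd: "\<And>t. t \<in> {0..T} \<Longrightarrow> (f has_vector_derivative f' t) (at t within {0..T})"
    and f0: "f 0 = 0"
    and bound: "\<And>t. t \<in> {0..T} \<Longrightarrow> norm (f' t) \<le> a * norm (f t) + c * (a * exp (2 * a * t))"
    and t: "t \<in> {0..T}"
  shows "norm (f t) \<le> c * (exp (a * t) * (exp (a * t) - 1))"
proof (rule gronwall_comparison[where w' = "\<lambda>t. c * (2 * a * exp (2 * a * t) - a * exp (a * t))",
      OF a fd _ _ _ t])
  fix s assume s: "s \<in> {0..T}"
  have "(\<lambda>t. c * (exp (a * t) * (exp (a * t) - 1))) = (\<lambda>t. c * (exp (2 * a * t) - exp (a * t)))"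
    by (auto simp: algebra_simps simp flip: exp_add)
  then show "((\<lambda>t. c * (exp (a * t) * (exp (a * t) - 1))) has_real_derivative
      c * (2 * a * exp (2 * a * s) - a * exp (a * s))) (at s within {0..T})"
    by (auto intro!: derivative_eq_intros simp: algebra_simps)
  show "norm (f' s) \<le> a * norm (f s)
      + (c * (2 * a * exp (2 * a * s) - a * exp (a * s)) - a * (c * (exp (a * s) * (exp (a * s) - 1))))"
    using bound[OF s] by (simp add: algebra_simps flip: exp_add)
next
  show "norm (f 0) \<le> c * (exp (a * 0) * (exp (a * 0) - 1))" using f0 by simp
qed

section \<open>Linear ODEs in Banach spaces\<close>

fun picard_iterate :: "(real \<Rightarrow> 'z::banach \<Rightarrow> 'z) \<Rightarrow> (real \<Rightarrow> 'z) \<Rightarrow> 'z \<Rightarrow> nat \<Rightarrow> real \<Rightarrow> 'z" where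
  "picard_iterate L c z0 0 = (\<lambda>t. z0)"
| "picard_iterate L c z0 (Suc n) = (\<lambda>t. z0 + integral {0..t} (\<lambda>s. L s (picard_iterate L c z0 n s) + c s))"

context
  fixes L :: "real \<Rightarrow> 'z::banach \<Rightarrow> 'z" and c :: "real \<Rightarrow> 'z" and T M :: real
  assumes linear_L: "\<And>t. linear (L t)"
    and M: "0 \<le> M"
    and norm_L: "\<And>t z. t \<in> {0..T} \<Longrightarrow> norm (L t z) \<le> M * norm z"
    and continuous_L: "\<And>g. continuous_on {0..T} g \<Longrightarrow> continuous_on {0..T} (\<lambda>t. L t (g t))"
    and continuous_c: "continuous_on {0..T} c"
begin

lemma picard_iterate_Suc_has_vector_derivative:
  assumes "continuous_on {0..T} (picard_iterate L c z0 n)" "t \<in> {0..T}"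
  shows "(picard_iterate L c z0 (Suc n) has_vector_derivative L t (picard_iterate L c z0 n t) + c t)
    (at t within {0..T})"
proof -
  have "continuous_on {0..T} (\<lambda>s. L s (picard_iterate L c z0 n s) + c s)"
    by (intro continuous_intros continuous_L continuous_c assms(1))
  from integral_has_vector_derivative[OF this assms(2)] show ?thesis
    by (auto intro!: derivative_eq_intros)
qed

lemma continuous_on_picard_iterate: "continuous_on {0..T} (picard_iterate L c z0 n)"
proof (induction n)
  case (Suc n)
  then show ?case
    using picard_iterate_Suc_has_vector_derivative
    by (meson continuous_on_eq_continuous_within has_vector_derivative_continuous)
qed simp

lemma picard_iterate_at_0: "picard_iterate L c z0 n 0 = z0"
  by (cases n) auto

lemma picard_increment_has_vector_derivative:
  assumes "0 < x" "x < T"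
  shows "((\<lambda>s. picard_iterate L c z0 (Suc (Suc n)) s - picard_iterate L c z0 (Suc n) s) has_vector_derivative
    L x (picard_iterate L c z0 (Suc n) x - picard_iterate L c z0 n x)) (at x)"
proof -
  let ?P = "picard_iterate L c z0"
  have "x \<in> {0..T}" "at x within {0..T} = at x" using assms by (auto intro: at_within_interior)
  then have "((\<lambda>s. ?P (Suc (Suc n)) s - ?P (Suc n) s) has_vector_derivative
      (L x (?P (Suc n) x) + c x) - (L x (?P n x) + c x)) (at x)"
    using has_vector_derivative_diff[OF
        picard_iterate_Suc_has_vector_derivative[OF continuous_on_picard_iterate, of x z0 "Suc n"]
        picard_iterate_Suc_has_vector_derivative[OF continuous_on_picard_iterate, of x z0 n]]
    by simp
  moreover have "(L x (?P (Suc n) x) + c x) - (L x (?P n x) + c x) = L x (?P (Suc n) x - ?P n x)"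
    by (simp add: linear_diff[OF linear_L] del: picard_iterate.simps)
  ultimately show ?thesis by simp
qed

lemma picard_increment_bound:
  assumes C: "\<And>s. s \<in> {0..T} \<Longrightarrow> norm (picard_iterate L c z0 1 s - picard_iterate L c z0 0 s) \<le> C"
    and t: "t \<in> {0..T}"
  shows "norm (picard_iterate L c z0 (Suc n) t - picard_iterate L c z0 n t) \<le> C * ((M * t) ^ n / fact n)"
  using t
proof (induction n arbitrary: t)
  case 0
  then show ?case using C by simp
next
  case (Suc n)
  let ?P = "picard_iterate L c z0"
  define d where "d s = ?P (Suc (Suc n)) s - ?P (Suc n) s" for s
  define \<phi> where "\<phi> s = C * M ^ Suc n / fact (Suc n) * s ^ Suc n" for s
  show ?case
  proof (cases "t = 0")
    case False
    then have "0 < t" using Suc.prems by simp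
    have "norm (d t - d 0) \<le> \<phi> t - \<phi> 0"
    proof (rule differentiable_bound_general[OF \<open>0 < t\<close>])
      show "continuous_on {0..t} d" unfolding d_def
        using Suc.prems by (intro continuous_intros continuous_on_subset[OF continuous_on_picard_iterate]) auto
      show "continuous_on {0..t} \<phi>" unfolding \<phi>_def by (intro continuous_intros) auto
      fix x assume x: "0 < x" "x < t"
      then show "(d has_vector_derivative L x (?P (Suc n) x - ?P n x)) (at x)"
        unfolding d_def using Suc.prems by (intro picard_increment_has_vector_derivative) auto
      have "(\<phi> has_real_derivative C * M ^ Suc n / fact (Suc n) * (of_nat (Suc n) * x ^ n)) (at x)"
        unfolding \<phi>_def using DERIV_pow[of "Suc n" x] by (intro DERIV_cmult) simp
      then show "(\<phi> has_vector_derivative C * (M * ((M * x) ^ n / fact n))) (at x)"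
        by (simp add: has_real_derivative_iff_has_vector_derivative fact_Suc power_mult_distrib del: of_nat_Suc)
      have "norm (L x (?P (Suc n) x - ?P n x)) \<le> M * (C * ((M * x) ^ n / fact n))"
        using x Suc.prems Suc.IH[of x] M by (intro order_trans[OF norm_L mult_left_mono]) auto
      then show "norm (L x (?P (Suc n) x - ?P n x)) \<le> C * (M * ((M * x) ^ n / fact n))"
        by (simp add: algebra_simps)
    qed
    moreover have "d 0 = 0" unfolding d_def by (simp add: picard_iterate_at_0)
    moreover have "\<phi> 0 = 0" "\<phi> t = C * ((M * t) ^ Suc n / fact (Suc n))"
      unfolding \<phi>_def by (simp_all add: power_mult_distrib)
    ultimately have "norm (d t) \<le> C * ((M * t) ^ Suc n / fact (Suc n))" by simp
    then show ?thesis by (simp only: d_def)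
  qed (simp add: picard_iterate_at_0)
qed

lemma picard_iterate_uniform_limit:
  "uniform_limit {0..T} (picard_iterate L c z0) (\<lambda>t. z0 + (\<Sum>i. picard_iterate L c z0 (Suc i) t - picard_iterate L c z0 i t)) sequentially"
proof -
  let ?P = "picard_iterate L c z0"
  have "compact ((\<lambda>s. norm (?P 1 s - ?P 0 s)) ` {0..T})"
    by (intro compact_continuous_image continuous_intros continuous_on_picard_iterate compact_Icc)
  then obtain C where "\<forall>r \<in> (\<lambda>s. norm (?P 1 s - ?P 0 s)) ` {0..T}. norm r \<le> C"
    using compact_imp_bounded bounded_iff by blast
  then have C: "\<And>s. s \<in> {0..T} \<Longrightarrow> norm (?P 1 s - ?P 0 s) \<le> C" by auto
  have "uniform_limit {0..T} (\<lambda>n t. \<Sum>i<n. ?P (Suc i) t - ?P i t) (\<lambda>t. \<Sum>i. ?P (Suc i) t - ?P i t) sequentially"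
  proof (rule Weierstrass_m_test)
    fix n t assume t: "t \<in> {0..T}"
    have "norm (?P (Suc n) t - ?P n t) \<le> C * ((M * t) ^ n / fact n)"
      by (rule picard_increment_bound[OF C t])
    also have "\<dots> \<le> \<bar>C\<bar> * ((M * T) ^ n / fact n)"
      using t M by (intro mult_mono divide_right_mono power_mono) auto
    finally show "norm (?P (Suc n) t - ?P n t) \<le> \<bar>C\<bar> * (inverse (fact n) * (M * T) ^ n)"
      by (simp add: field_simps)
  next
    show "summable (\<lambda>n. \<bar>C\<bar> * (inverse (fact n) * (M * T) ^ n))"
      by (intro summable_mult summable_exp)
  qed
  moreover have "(\<Sum>i<n. ?P (Suc i) t - ?P i t) = ?P n t - z0" for n t
    using sum_lessThan_telescope[of "\<lambda>i. ?P i t" n] by simp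
  ultimately show ?thesis
    unfolding uniform_limit_iff by (simp add: dist_norm algebra_simps del: picard_iterate.simps)
qed

lemma uniform_limit_affine_vector_field:
  assumes "uniform_limit {0..T} P G sequentially" "e > 0"
  shows "\<forall>\<^sub>F n in sequentially. \<forall>t\<in>{0..T}. \<forall>h.
    norm (h *\<^sub>R (L t (P n t) + c t) - h *\<^sub>R (L t (G t) + c t)) \<le> e * norm h"
proof -
  have "\<forall>\<^sub>F n in sequentially. \<forall>t\<in>{0..T}. dist (P n t) (G t) < e / (M + 1)"
    using assms M unfolding uniform_limit_iff by simp
  then show ?thesis
  proof eventually_elim
    case (elim n)
    show ?case
    proof (intro ballI allI)
      fix t h assume t: "t \<in> {0..T}"
      have "norm (h *\<^sub>R (L t (P n t) + c t) - h *\<^sub>R (L t (G t) + c t)) = \<bar>h\<bar> * norm (L t (P n t - G t))"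
        by (simp add: linear_diff[OF linear_L] flip: scaleR_diff_right)
      also have "\<dots> \<le> \<bar>h\<bar> * (M * norm (P n t - G t))"
        using t by (intro mult_left_mono norm_L) auto
      also have "\<dots> \<le> \<bar>h\<bar> * ((M + 1) * (e / (M + 1)))"
        using elim t M by (intro mult_left_mono mult_mono) (auto simp: dist_norm less_imp_le)
      finally show "norm (h *\<^sub>R (L t (P n t) + c t) - h *\<^sub>R (L t (G t) + c t)) \<le> e * norm h"
        using M by (simp add: mult.commute)
    qed
  qed
qed

lemma linear_ode_exists:
  assumes "0 \<le> T"
  shows "\<exists>z. z 0 = z0 \<and> (\<forall>t\<in>{0..T}. (z has_vector_derivative L t (z t) + c t) (at t within {0..T}))"
proof -
  let ?P = "picard_iterate L c z0"
  define G where "G t = z0 + (\<Sum>i. ?P (Suc i) t - ?P i t)" for t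
  have P_G: "uniform_limit {0..T} ?P G sequentially"
    unfolding G_def by (rule picard_iterate_uniform_limit)
  have "\<exists>g. \<forall>t\<in>{0..T}. (\<lambda>n. ?P (Suc n) t) \<longlonglongrightarrow> g t \<and>
      (g has_derivative (\<lambda>h. h *\<^sub>R (L t (G t) + c t))) (at t within {0..T})"
  proof (rule has_derivative_sequence[of "{0..T}" "\<lambda>n. ?P (Suc n)" "\<lambda>n t h. h *\<^sub>R (L t (?P n t) + c t)"
        "\<lambda>t h. h *\<^sub>R (L t (G t) + c t)" 0 z0])
    fix n t assume "t \<in> {0..T}"
    then show "(?P (Suc n) has_derivative (\<lambda>h. h *\<^sub>R (L t (?P n t) + c t))) (at t within {0..T})"
      using picard_iterate_Suc_has_vector_derivative[OF continuous_on_picard_iterate]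
      unfolding has_vector_derivative_def by blast
  next
    fix e :: real assume "e > 0"
    with P_G show "\<forall>\<^sub>F n in sequentially. \<forall>t\<in>{0..T}. \<forall>h.
        norm (h *\<^sub>R (L t (?P n t) + c t) - h *\<^sub>R (L t (G t) + c t)) \<le> e * norm h"
      by (rule uniform_limit_affine_vector_field)
  qed (use assms in \<open>auto simp: picard_iterate_at_0\<close>)
  then obtain g where g_lim: "\<And>t. t \<in> {0..T} \<Longrightarrow> (\<lambda>n. ?P (Suc n) t) \<longlonglongrightarrow> g t"
    and g_deriv: "\<And>t. t \<in> {0..T} \<Longrightarrow> (g has_derivative (\<lambda>h. h *\<^sub>R (L t (G t) + c t))) (at t within {0..T})"
    by blast
  have g_G: "g t = G t" if "t \<in> {0..T}" for t
    using LIMSEQ_unique[OF g_lim[OF that] LIMSEQ_Suc[OF tendsto_uniform_limitI[OF P_G that]]] .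
  show ?thesis
  proof (intro exI conjI ballI)
    show "g 0 = z0"
      using g_lim[of 0] assms by (simp add: picard_iterate_at_0 LIMSEQ_const_iff)
    fix t assume t: "t \<in> {0..T}"
    show "(g has_vector_derivative L t (g t) + c t) (at t within {0..T})"
      using g_deriv[OF t] g_G[OF t] unfolding has_vector_derivative_def by simp
  qed
qed

end

section \<open>Spatial derivatives, sup norms and the weak norm\<close>

lemma has_derivative_sD:
  assumes "f differentiable (at x)"
  shows "(f has_derivative blinfun_apply (sD f x)) (at x)"
proof -
  have d: "(f has_derivative frechet_derivative f (at x)) (at x)"
    using assms frechet_derivative_works by blast
  then have "bounded_linear (frechet_derivative f (at x))" by (rule has_derivative_bounded_linear)
  then show ?thesis using d unfolding sD_def by (simp add: bounded_linear_Blinfun_apply)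
qed

lemma sD_eqI:
  assumes "(f has_derivative blinfun_apply A) (at x)"
  shows "sD f x = A"
proof -
  have "frechet_derivative f (at x) = blinfun_apply A" using frechet_derivative_at[OF assms] by simp
  then show ?thesis unfolding sD_def by (simp add: blinfun_apply_inverse)
qed

lemma sD_diff:
  assumes "f differentiable (at x)" "g differentiable (at x)"
  shows "sD (\<lambda>x. f x - g x) x = sD f x - sD g x"
  by (rule sD_eqI) (auto intro!: derivative_eq_intros has_derivative_sD assms simp: blinfun.diff_left)

lemma sD_diff_fun:
  assumes "\<And>x. f differentiable (at x)" "\<And>x. g differentiable (at x)"
  shows "sD (\<lambda>x. f x - g x) = (\<lambda>x. sD f x - sD g x)"
  using sD_diff assms by blast

lemma norm_le_supn:
  assumes "bounded (range f)"
  shows "norm (f x) \<le> supn f"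
proof -
  have "bdd_above (range (\<lambda>x. norm (f x)))"
    using assms by (auto simp: bounded_iff bdd_above_def)
  then show ?thesis unfolding supn_def by (rule cSUP_upper[OF UNIV_I])
qed

lemma supn_nonneg:
  assumes "bounded (range f)"
  shows "0 \<le> supn f"
  using norm_le_supn[OF assms, of undefined] norm_ge_zero order_trans by blast

lemma bounded_range_diff:
  fixes f g :: "'b \<Rightarrow> 'c::real_normed_vector"
  assumes "bounded (range f)" "bounded (range g)"
  shows "bounded (range (\<lambda>x. f x - g x))"
proof -
  obtain a b where "\<And>x. norm (f x) \<le> a" "\<And>x. norm (g x) \<le> b"
    using assms by (auto simp: bounded_iff)
  then have "\<And>x. norm (f x - g x) \<le> a + b"
    by (meson add_mono norm_triangle_ineq4 order_trans)
  then show ?thesis by (auto simp: bounded_iff)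
qed

lemma norm_le_normC2:
  assumes "Cb2 f"
  shows "norm (f x) \<le> normC2 f" "norm (sD f x) \<le> normC2 f" "norm (sD (sD f) x) \<le> normC2 f"
proof -
  have b: "bounded (range f)" "bounded (range (sD f))" "bounded (range (sD (sD f)))"
    using assms unfolding Cb2_def by auto
  note n = supn_nonneg[OF b(1)] supn_nonneg[OF b(2)] supn_nonneg[OF b(3)]
  show "norm (f x) \<le> normC2 f" using norm_le_supn[OF b(1), of x] n unfolding normC2_def by linarith
  show "norm (sD f x) \<le> normC2 f" using norm_le_supn[OF b(2), of x] n unfolding normC2_def by linarith
  show "norm (sD (sD f) x) \<le> normC2 f" using norm_le_supn[OF b(3), of x] n unfolding normC2_def by linarith
qed

lemma sD_sD_diff:
  assumes "Cb2 f" "Cb2 g"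
  shows "sD (sD (\<lambda>x. f x - g x)) x = sD (sD f) x - sD (sD g) x"
proof -
  have "sD (\<lambda>x. f x - g x) = (\<lambda>x. sD f x - sD g x)"
    using assms by (intro sD_diff_fun) (auto simp: Cb2_def)
  then show ?thesis using assms by (simp add: sD_diff Cb2_def)
qed

lemma Cb2_diff:
  assumes "Cb2 f" "Cb2 g"
  shows "Cb2 (\<lambda>x. f x - g x)"
proof -
  have D: "sD (\<lambda>x. f x - g x) = (\<lambda>x. sD f x - sD g x)"
    using assms by (intro sD_diff_fun) (auto simp: Cb2_def)
  have DD: "sD (\<lambda>x. sD f x - sD g x) = (\<lambda>x. sD (sD f) x - sD (sD g) x)"
    using sD_sD_diff[OF assms] unfolding D by blast
  show ?thesis
    using assms unfolding Cb2_def D DD by (auto intro!: bounded_range_diff continuous_intros)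
qed

lemma Lip_nonneg:
  assumes "lipschitz_on L UNIV (apply_bcontfun \<theta>)"
  shows "0 \<le> Lip \<theta>"
  unfolding Lip_def using assms by (intro cInf_greatest) (auto simp: lipschitz_on_def)

lemma Lip_zero: "Lip (0::'a::metric_space \<Rightarrow>\<^sub>C 'b::real_normed_vector) = 0"
proof -
  have l: "lipschitz_on 0 UNIV (apply_bcontfun (0::'a \<Rightarrow>\<^sub>C 'b))"
    by (simp add: lipschitz_on_def)
  have "Lip (0::'a \<Rightarrow>\<^sub>C 'b) \<le> 0" unfolding Lip_def
    using l by (intro cInf_lower) (auto simp: bdd_below_def lipschitz_on_def)
  moreover have "0 \<le> Lip (0::'a \<Rightarrow>\<^sub>C 'b)" by (rule Lip_nonneg[OF l])
  ultimately show ?thesis by simp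
qed

lemma lipschitz_uminus_iff:
  "lipschitz_on L UNIV (apply_bcontfun (- \<theta>)) \<longleftrightarrow> lipschitz_on L UNIV (apply_bcontfun \<theta>)"
  by (simp add: lipschitz_on_def dist_minus)

lemma Lip_uminus: "Lip (- \<theta>) = Lip \<theta>"
  unfolding Lip_def lipschitz_uminus_iff ..

lemma test_fields_zero: "0 \<in> test_fields"
  unfolding test_fields_def by (auto simp: Lip_zero intro!: exI[of _ 0] simp: lipschitz_on_def)

lemma test_fields_uminus: "\<theta> \<in> test_fields \<Longrightarrow> - \<theta> \<in> test_fields"
  unfolding test_fields_def by (auto simp: Lip_uminus lipschitz_uminus_iff)

lemma test_fields_norm: "\<theta> \<in> test_fields \<Longrightarrow> norm \<theta> \<le> 1"
  unfolding test_fields_def using Lip_nonneg by fastforce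

lemma wnorm_bdd_above:
  fixes \<xi> :: "'a::euclidean_space meas"
  shows "bdd_above ((\<lambda>\<theta>. blinfun_apply \<xi> \<theta>) ` test_fields)"
proof (rule bdd_aboveI2)
  fix \<theta> :: "'a \<Rightarrow>\<^sub>C 'a" assume "\<theta> \<in> test_fields"
  then have "blinfun_apply \<xi> \<theta> \<le> norm \<xi> * norm \<theta>" "norm \<theta> \<le> 1"
    using norm_blinfun[of \<xi> \<theta>] test_fields_norm by auto
  then show "blinfun_apply \<xi> \<theta> \<le> norm \<xi>"
    using mult_left_le[of "norm \<theta>" "norm \<xi>"] by simp
qed

lemma apply_le_wnorm:
  fixes \<xi> :: "'a::euclidean_space meas"
  shows "\<theta> \<in> test_fields \<Longrightarrow> blinfun_apply \<xi> \<theta> \<le> wnorm \<xi>"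
  unfolding wnorm_def by (rule cSUP_upper[OF _ wnorm_bdd_above])

lemma wnorm_nonneg:
  fixes \<xi> :: "'a::euclidean_space meas"
  shows "0 \<le> wnorm \<xi>"
  using apply_le_wnorm[OF test_fields_zero, of \<xi>] by simp

lemma wnorm_triangle:
  fixes \<xi> \<eta> :: "'a::euclidean_space meas"
  shows "wnorm (\<xi> + \<eta>) \<le> wnorm \<xi> + wnorm \<eta>"
  unfolding wnorm_def[of "\<xi> + \<eta>"]
proof (rule cSUP_least)
  show "test_fields \<noteq> {}" using test_fields_zero by auto
  fix \<theta> :: "'a \<Rightarrow>\<^sub>C 'a" assume "\<theta> \<in> test_fields"
  then show "blinfun_apply (\<xi> + \<eta>) \<theta> \<le> wnorm \<xi> + wnorm \<eta>"
    using apply_le_wnorm[of \<theta> \<xi>] apply_le_wnorm[of \<theta> \<eta>] by (simp add: blinfun.add_left)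
qed

lemma wnorm_uminus:
  fixes \<xi> :: "'a::euclidean_space meas"
  shows "wnorm (- \<xi>) = wnorm \<xi>"
proof -
  have le: "wnorm (- \<eta>) \<le> wnorm \<eta>" for \<eta> :: "'a meas"
    unfolding wnorm_def[of "- \<eta>"]
  proof (rule cSUP_least)
    show "test_fields \<noteq> {}" using test_fields_zero by auto
    fix \<theta> :: "'a \<Rightarrow>\<^sub>C 'a" assume "\<theta> \<in> test_fields"
    then have "blinfun_apply \<eta> (- \<theta>) \<le> wnorm \<eta>" by (intro apply_le_wnorm test_fields_uminus)
    then show "blinfun_apply (- \<eta>) \<theta> \<le> wnorm \<eta>"
      by (simp add: blinfun.minus_left blinfun.minus_right)
  qed
  show ?thesis using le[of \<xi>] le[of "- \<xi>"] by simp
qed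

lemma wnorm_diff_le:
  fixes \<xi> \<eta> :: "'a::euclidean_space meas"
  shows "wnorm (\<xi> - \<eta>) \<le> wnorm \<xi> + wnorm \<eta>"
  using wnorm_triangle[of \<xi> "- \<eta>"] by (simp add: wnorm_uminus)

lemma wnorm_commute:
  fixes \<xi> \<eta> :: "'a::euclidean_space meas"
  shows "wnorm (\<xi> - \<eta>) = wnorm (\<eta> - \<xi>)"
  using wnorm_uminus[of "\<xi> - \<eta>"] by simp

lemma wcont_diff:
  assumes "wcont T \<xi>" "wcont T \<xi>'"
  shows "wcont T (\<lambda>s. \<xi> s - \<xi>' s)"
  unfolding wcont_def
proof (intro ballI allI impI)
  fix t e assume t: "t \<in> {0..T}" and e: "(e::real) > 0"
  obtain d1 where d1: "d1 > 0" "\<forall>s\<in>{0..T}. \<bar>s - t\<bar> < d1 \<longrightarrow> wnorm (\<xi> s - \<xi> t) < e/2"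
    using assms(1) t e unfolding wcont_def by (meson half_gt_zero)
  obtain d2 where d2: "d2 > 0" "\<forall>s\<in>{0..T}. \<bar>s - t\<bar> < d2 \<longrightarrow> wnorm (\<xi>' s - \<xi>' t) < e/2"
    using assms(2) t e unfolding wcont_def by (meson half_gt_zero)
  show "\<exists>\<delta>>0. \<forall>s\<in>{0..T}. \<bar>s - t\<bar> < \<delta> \<longrightarrow> wnorm (\<xi> s - \<xi>' s - (\<xi> t - \<xi>' t)) < e"
  proof (intro exI[of _ "min d1 d2"] conjI ballI impI)
    show "0 < min d1 d2" using d1 d2 by simp
    fix s assume s: "s \<in> {0..T}" "\<bar>s - t\<bar> < min d1 d2"
    have "\<xi> s - \<xi>' s - (\<xi> t - \<xi>' t) = (\<xi> s - \<xi> t) - (\<xi>' s - \<xi>' t)" by (simp add: algebra_simps)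
    then have "wnorm (\<xi> s - \<xi>' s - (\<xi> t - \<xi>' t)) \<le> wnorm (\<xi> s - \<xi> t) + wnorm (\<xi>' s - \<xi>' t)"
      using wnorm_diff_le by metis
    also have "\<dots> < e" using d1(2) d2(2) s by fastforce
    finally show "wnorm (\<xi> s - \<xi>' s - (\<xi> t - \<xi>' t)) < e" .
  qed
qed

lemma continuous_on_wnorm:
  assumes "wcont T \<xi>"
  shows "continuous_on {0..T} (\<lambda>t. wnorm (\<xi> t))"
  unfolding continuous_on_iff
proof (intro ballI allI impI)
  fix t e assume t: "t \<in> {0..T}" and e: "(e::real) > 0"
  obtain d where d: "d > 0" "\<forall>s\<in>{0..T}. \<bar>s - t\<bar> < d \<longrightarrow> wnorm (\<xi> s - \<xi> t) < e"
    using assms t e unfolding wcont_def by blast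
  show "\<exists>d>0. \<forall>s\<in>{0..T}. dist s t < d \<longrightarrow> dist (wnorm (\<xi> s)) (wnorm (\<xi> t)) < e"
  proof (intro exI[of _ d] conjI ballI impI)
    show "d > 0" by fact
    fix s assume s: "s \<in> {0..T}" "dist s t < d"
    have w: "wnorm (\<xi> s - \<xi> t) < e" using d s by (simp add: dist_real_def)
    have "wnorm (\<xi> s) \<le> wnorm (\<xi> t) + wnorm (\<xi> s - \<xi> t)"
      using wnorm_triangle[of "\<xi> t" "\<xi> s - \<xi> t"] by simp
    moreover have "wnorm (\<xi> t) \<le> wnorm (\<xi> s) + wnorm (\<xi> s - \<xi> t)"
      using wnorm_triangle[of "\<xi> s" "\<xi> t - \<xi> s"] wnorm_commute[of "\<xi> t" "\<xi> s"] by simp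
    ultimately show "dist (wnorm (\<xi> s)) (wnorm (\<xi> t)) < e" using w by (simp add: dist_real_def)
  qed
qed

lemma wnorm_le_normT:
  assumes "wcont T \<xi>" "t \<in> {0..T}"
  shows "wnorm (\<xi> t) \<le> normT T \<xi>"
proof -
  have "compact ((\<lambda>t. wnorm (\<xi> t)) ` {0..T})"
    by (rule compact_continuous_image[OF continuous_on_wnorm[OF assms(1)]]) simp
  then have "bdd_above ((\<lambda>t. wnorm (\<xi> t)) ` {0..T})"
    by (meson bounded_imp_bdd_above compact_imp_bounded)
  then show ?thesis unfolding normT_def using assms(2) by (rule cSUP_upper2) auto
qed

lemma normT_nonneg:
  assumes "wcont T \<xi>" "0 \<le> T"
  shows "0 \<le> normT T \<xi>"
  using wnorm_le_normT[OF assms(1), of 0] assms(2) wnorm_nonneg[of "\<xi> 0"] by simp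

lemma standing_pos: "standing B CB \<Longrightarrow> CB > 0" unfolding standing_def by simp

lemma standing_Cb2: "standing B CB \<Longrightarrow> Cb2 (B \<xi>)" unfolding standing_def by simp

lemma standing_norm_le:
  assumes "standing B CB"
  shows "norm (sD (B \<xi>) x) \<le> CB * (wnorm \<xi> + 1)"
    "norm (sD (sD (B \<xi>)) x) \<le> CB * (wnorm \<xi> + 1)"
  using norm_le_normC2(2,3)[OF standing_Cb2[OF assms, of \<xi>]] assms unfolding standing_def
  by (meson order_trans)+

lemma standing_field_lipschitz:
  assumes "standing B CB"
  shows "norm (B \<xi> x - B \<xi>' x) \<le> CB * wnorm (\<xi> - \<xi>')"
proof -
  have b: "bounded (range (\<lambda>x. B \<xi> x - B \<xi>' x))"
    using standing_Cb2[OF assms] by (intro bounded_range_diff) (auto simp: Cb2_def)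
  show ?thesis using norm_le_supn[OF b, of x] assms unfolding standing_def by (meson order_trans)
qed

lemma standing_deriv_lipschitz:
  assumes "standing B CB"
  shows "norm (sD (B \<xi>) x - sD (B \<xi>') x) \<le> CB * wnorm (\<xi> - \<xi>')"
proof -
  have b: "bounded (range (\<lambda>x. sD (B \<xi>) x - sD (B \<xi>') x))"
    using standing_Cb2[OF assms] by (intro bounded_range_diff) (auto simp: Cb2_def)
  show ?thesis using norm_le_supn[OF b, of x] assms unfolding standing_def by (meson order_trans)
qed

lemma standing_deriv2_continuous:
  assumes "standing B CB" "e > 0"
  shows "\<exists>d>0. \<forall>\<xi>'. wnorm (\<xi>' - \<xi>) < d \<longrightarrow> (\<forall>x. norm (sD (sD (B \<xi>')) x - sD (sD (B \<xi>)) x) < e)"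
proof -
  obtain d where "d > 0" and d: "\<forall>\<xi>'. wnorm (\<xi>' - \<xi>) < d \<longrightarrow> normC2 (\<lambda>x. B \<xi>' x - B \<xi> x) < e"
    using assms unfolding standing_def by blast
  have "norm (sD (sD (B \<xi>')) x - sD (sD (B \<xi>)) x) \<le> normC2 (\<lambda>x. B \<xi>' x - B \<xi> x)" for \<xi>' x
    using norm_le_normC2(3)[OF Cb2_diff, of "B \<xi>'" "B \<xi>" x] standing_Cb2[OF assms(1)]
    by (simp add: sD_sD_diff)
  then show ?thesis using \<open>d > 0\<close> d by (blast intro: le_less_trans)
qed

section \<open>Derivatives, linearizations and joint continuity\<close>

lemma has_derivative_of_quadratic_remainder:
  assumes A: "bounded_linear A"
    and remainder: "\<And>y. norm (f y - f x - A (y - x)) \<le> C * norm (y - x)^2"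
  shows "(f has_derivative A) (at x)"
  unfolding has_derivative_at_alt
proof (intro conjI allI impI A)
  fix e :: real assume "e > 0"
  show "\<exists>d>0. \<forall>y. norm (y - x) < d \<longrightarrow> norm (f y - f x - A (y - x)) \<le> e * norm (y - x)"
  proof (intro exI[of _ "e / (\<bar>C\<bar> + 1)"] conjI allI impI)
    show "0 < e / (\<bar>C\<bar> + 1)" using \<open>e > 0\<close> by simp
    fix y assume y: "norm (y - x) < e / (\<bar>C\<bar> + 1)"
    have "C * norm (y - x)^2 \<le> (\<bar>C\<bar> + 1) * norm (y - x)^2" by (intro mult_right_mono) auto
    then have "norm (f y - f x - A (y - x)) \<le> (\<bar>C\<bar> + 1) * norm (y - x) * norm (y - x)"
      using remainder[of y] by (simp add: power2_eq_square mult.assoc)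
    also have "\<dots> \<le> (\<bar>C\<bar> + 1) * (e / (\<bar>C\<bar> + 1)) * norm (y - x)"
      using y by (intro mult_left_mono mult_right_mono) auto
    finally show "norm (f y - f x - A (y - x)) \<le> e * norm (y - x)" by simp
  qed
qed

lemma has_vector_derivative_blinfun_apply:
  "(J has_vector_derivative J') F \<Longrightarrow> ((\<lambda>s. blinfun_apply (J s) h) has_vector_derivative blinfun_apply J' h) F"
  by (rule bounded_linear.has_vector_derivative[OF blinfun.bounded_linear_left])

lemma norm_blinfun_compose_le:
  assumes "norm X \<le> a" "norm Y \<le> b"
  shows "norm (X o\<^sub>L Y) \<le> a * b"
  using norm_blinfun_compose[of X Y] mult_mono[OF assms order_trans[OF norm_ge_zero assms(1)] norm_ge_zero]
  by linarith

lemma norm_blinfun_apply_le: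
  assumes "norm A \<le> a"
  shows "norm (blinfun_apply A v) \<le> a * norm v"
  using norm_blinfun[of A v] mult_right_mono[OF assms norm_ge_zero[of v]] by linarith

lemma lipschitz_of_derivative_bound:
  assumes "\<And>z. (f has_derivative blinfun_apply (f' z)) (at z)" "\<And>z. norm (f' z) \<le> L"
  shows "norm (f x - f y) \<le> L * norm (x - y)"
  by (rule differentiable_bound[OF convex_UNIV _ _ UNIV_I UNIV_I])
    (use assms in \<open>auto simp flip: norm_blinfun.rep_eq\<close>)

lemma linearization_le:
  assumes "\<And>z. (f has_derivative blinfun_apply (f' z)) (at z)"
    and "\<And>z. z \<in> closed_segment x y \<Longrightarrow> norm (f' z - f' x) \<le> \<omega>"
  shows "norm (f y - f x - f' x (y - x)) \<le> norm (y - x) * \<omega>"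
proof (rule differentiable_bound_linearization[where S = "closed_segment x y" and f' = "\<lambda>z. blinfun_apply (f' z)"])
  fix u :: real assume "u \<in> {0..1}"
  moreover have "x + u *\<^sub>R (y - x) = (1 - u) *\<^sub>R x + u *\<^sub>R y" by (simp add: algebra_simps)
  ultimately show "x + u *\<^sub>R (y - x) \<in> closed_segment x y" unfolding in_segment(1) by auto
next
  fix z assume "z \<in> closed_segment x y"
  show "(f has_derivative blinfun_apply (f' z)) (at z within closed_segment x y)"
    by (rule has_derivative_at_withinI[OF assms(1)])
  show "onorm (blinfun_apply (f' z) - blinfun_apply (f' x)) \<le> \<omega>"
    using assms(2)[OF \<open>z \<in> closed_segment x y\<close>] by (simp add: norm_blinfun.rep_eq blinfun.diff_left[abs_def] fun_diff_def)
qed simp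

lemma continuous_on_uniformly_in_space:
  fixes G :: "'t::metric_space \<Rightarrow> 'x::metric_space \<Rightarrow> 'y::metric_space"
  assumes "\<And>t. t \<in> S \<Longrightarrow> continuous_on UNIV (G t)"
    and "\<And>t e. t \<in> S \<Longrightarrow> e > 0 \<Longrightarrow> \<exists>d>0. \<forall>s\<in>S. dist s t < d \<longrightarrow> (\<forall>z. dist (G s z) (G t z) < e)"
  shows "continuous_on (S \<times> UNIV) (\<lambda>x. G (fst x) (snd x))"
  unfolding continuous_on_iff
proof (intro ballI allI impI)
  fix x :: "'t \<times> 'x" and e :: real assume "x \<in> S \<times> UNIV" "e > 0"
  then obtain t z where x: "x = (t, z)" and "t \<in> S" by auto
  obtain d1 where "d1 > 0" and d1: "\<forall>s\<in>S. dist s t < d1 \<longrightarrow> (\<forall>z. dist (G s z) (G t z) < e / 2)"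
    using assms(2)[OF \<open>t \<in> S\<close>, of "e / 2"] \<open>e > 0\<close> by auto
  obtain d2 where "d2 > 0" and d2: "\<forall>z'. dist z' z < d2 \<longrightarrow> dist (G t z') (G t z) < e / 2"
    using assms(1)[OF \<open>t \<in> S\<close>] \<open>e > 0\<close> unfolding continuous_on_iff by (metis UNIV_I half_gt_zero)
  show "\<exists>d>0. \<forall>x'\<in>S \<times> UNIV. dist x' x < d \<longrightarrow> dist (G (fst x') (snd x')) (G (fst x) (snd x)) < e"
  proof (intro exI[of _ "min d1 d2"] conjI ballI impI)
    show "0 < min d1 d2" using \<open>d1 > 0\<close> \<open>d2 > 0\<close> by simp
    fix x' assume "x' \<in> S \<times> UNIV" "dist x' x < min d1 d2"
    moreover obtain s z' where "x' = (s, z')" by (cases x')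
    ultimately have "s \<in> S" "dist s t < d1" "dist z' z < d2"
      using dist_fst_le[of x' x] dist_snd_le[of x' x] x by auto
    then show "dist (G (fst x') (snd x')) (G (fst x) (snd x)) < e"
      using d1 d2 dist_triangle_half_l[of "G s z'" "G t z'" e "G t z"] \<open>x' = (s, z')\<close> x
      by (simp add: dist_commute)
  qed
qed

lemma continuous_on_along_path:
  assumes "continuous_on (S \<times> UNIV) (\<lambda>x. G (fst x) (snd x))" "continuous_on S p"
  shows "continuous_on S (\<lambda>t. G t (p t))"
proof -
  have "continuous_on S (\<lambda>t. (t, p t))" by (intro continuous_intros assms(2))
  from continuous_on_compose2[OF assms(1) this] show ?thesis by auto
qed

lemma uniform_modulus_along_path:
  fixes G :: "'t::metric_space \<Rightarrow> 'x::euclidean_space \<Rightarrow> 'y::real_normed_vector"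
  assumes "compact S" "continuous_on (S \<times> UNIV) (\<lambda>x. G (fst x) (snd x))" "continuous_on S p" "e > 0"
  shows "\<exists>d>0. \<forall>t\<in>S. \<forall>z. norm (z - p t) < d \<longrightarrow> norm (G t z - G t (p t)) < e"
proof -
  define N where "N = (\<lambda>x. (fst x, p (fst x) + snd x)) ` (S \<times> cball 0 1)"
  have "continuous_on (S \<times> cball 0 1) (\<lambda>x. p (fst x))"
    by (rule continuous_on_compose2[OF assms(3) continuous_on_fst[OF continuous_on_id]]) auto
  then have "continuous_on (S \<times> cball 0 1) (\<lambda>x. (fst x, p (fst x) + snd x))"
    by (intro continuous_intros)
  then have "compact N" unfolding N_def by (intro compact_continuous_image compact_Times assms(1) compact_cball)
  moreover have "N \<subseteq> S \<times> UNIV" unfolding N_def by auto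
  ultimately have "uniformly_continuous_on N (\<lambda>x. G (fst x) (snd x))"
    using compact_uniformly_continuous continuous_on_subset[OF assms(2)] by blast
  then obtain d where "d > 0" and d: "\<forall>x\<in>N. \<forall>x'\<in>N. dist x' x < d \<longrightarrow> dist (G (fst x') (snd x')) (G (fst x) (snd x)) < e"
    using assms(4) unfolding uniformly_continuous_on_def by blast
  show ?thesis
  proof (intro exI[of _ "min d 1"] conjI ballI allI impI)
    show "0 < min d 1" using \<open>d > 0\<close> by simp
    fix t z assume "t \<in> S" "norm (z - p t) < min d 1"
    moreover have "(t, z) \<in> N"
      unfolding N_def using \<open>t \<in> S\<close> \<open>norm (z - p t) < min d 1\<close>
      by (intro image_eqI[of _ _ "(t, z - p t)"]) (auto simp: dist_norm norm_minus_commute)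
    moreover have "(t, p t) \<in> N"
      unfolding N_def using \<open>t \<in> S\<close> by (intro image_eqI[of _ _ "(t, 0)"]) auto
    moreover have "dist (t, z) (t, p t) < d"
      using \<open>norm (z - p t) < min d 1\<close> by (simp add: dist_Pair_Pair dist_norm)
    ultimately show "norm (G t z - G t (p t)) < e"
      using d by (metis dist_norm fst_conv snd_conv)
  qed
qed

lemma exp_minus_one_le: "0 \<le> (a::real) \<Longrightarrow> exp a - 1 \<le> a * exp a"
proof -
  assume "0 \<le> a"
  have "(1 - a) * exp a \<le> exp (- a) * exp a"
    using exp_ge_add_one_self[of "- a"] by (intro mult_right_mono) auto
  then show ?thesis by (simp add: algebra_simps flip: exp_add)
qed

interpretation blinfun_compose: bounded_bilinear "(o\<^sub>L)"
  by (rule bounded_bilinear_blinfun_compose)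

lemma norm_blinfun_compose_prod_right_le: "norm (blinfun_compose.prod_right A) \<le> norm A"
  by (rule norm_blinfun_bound[OF norm_ge_zero]) (simp add: norm_blinfun_compose)

lemma blinfun_compose_second_order_split:
  fixes A A' J J' H :: "'a::real_normed_vector \<Rightarrow>\<^sub>L 'a" and D :: "'a \<Rightarrow>\<^sub>L 'a \<Rightarrow>\<^sub>L 'a" and \<Delta> h :: 'a
  shows "(A' o\<^sub>L J') - (A o\<^sub>L J) - ((A o\<^sub>L H) + (D (J h) o\<^sub>L J))
    = (A o\<^sub>L (J' - J - H)) + ((A' - A - D \<Delta>) o\<^sub>L J') + (D (\<Delta> - J h) o\<^sub>L J') + (D (J h) o\<^sub>L (J' - J))"
  by (rule blinfun_eqI) (simp add: blinfun.bilinear_simps algebra_simps)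

section \<open>The flow and its variational equations\<close>

locale field_flow =
  fixes B :: "'a::euclidean_space meas \<Rightarrow> 'a \<Rightarrow> 'a" and CB T :: real
    and \<xi> :: "real \<Rightarrow> 'a meas" and \<phi> :: "real \<Rightarrow> 'a \<Rightarrow> 'a"
  assumes standing: "standing B CB" and T_pos: "0 < T" and wcont: "wcont T \<xi>"
    and flow: "is_flow B T \<xi> \<phi>"
begin

definition K :: real where "K = CB * (normT T \<xi> + 1)"

lemma CB_pos: "0 < CB"
  using standing_pos[OF standing] .

lemma K_pos: "0 < K"
  using CB_pos normT_nonneg[OF wcont] T_pos unfolding K_def by simp

lemma exp_K_le: "t \<in> {0..T} \<Longrightarrow> exp (K * t) \<le> exp (K * T)"
  using K_pos by simp

lemma standing_bound_le_K: "t \<in> {0..T} \<Longrightarrow> CB * (wnorm (\<xi> t) + 1) \<le> K"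
  unfolding K_def using wnorm_le_normT[OF wcont] CB_pos by simp

lemma norm_field_deriv_le: "t \<in> {0..T} \<Longrightarrow> norm (sD (B (\<xi> t)) x) \<le> K"
  using standing_norm_le(1)[OF standing] standing_bound_le_K order_trans by blast

lemma norm_field_deriv2_le: "t \<in> {0..T} \<Longrightarrow> norm (sD (sD (B (\<xi> t))) x) \<le> K"
  using standing_norm_le(2)[OF standing] standing_bound_le_K order_trans by blast

lemma field_has_derivative: "(B \<zeta> has_derivative blinfun_apply (sD (B \<zeta>) x)) (at x)"
  using standing_Cb2[OF standing] unfolding Cb2_def by (intro has_derivative_sD) auto

lemma field_deriv_has_derivative: "(sD (B \<zeta>) has_derivative blinfun_apply (sD (sD (B \<zeta>)) x)) (at x)"
  using standing_Cb2[OF standing] unfolding Cb2_def by (intro has_derivative_sD) auto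

lemma field_lipschitz: "t \<in> {0..T} \<Longrightarrow> norm (B (\<xi> t) x - B (\<xi> t) y) \<le> K * norm (x - y)"
  by (rule lipschitz_of_derivative_bound[OF field_has_derivative norm_field_deriv_le])

lemma field_deriv_lipschitz: "t \<in> {0..T} \<Longrightarrow> norm (sD (B (\<xi> t)) x - sD (B (\<xi> t)) y) \<le> K * norm (x - y)"
  by (rule lipschitz_of_derivative_bound[OF field_deriv_has_derivative norm_field_deriv2_le])

lemma field_linearization:
  assumes "t \<in> {0..T}"
  shows "norm (B (\<xi> t) y - B (\<xi> t) x - sD (B (\<xi> t)) x (y - x)) \<le> K * norm (y - x)^2"
proof -
  have "norm (B (\<xi> t) y - B (\<xi> t) x - sD (B (\<xi> t)) x (y - x)) \<le> norm (y - x) * (K * norm (y - x))"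
  proof (rule linearization_le[OF field_has_derivative])
    fix z assume "z \<in> closed_segment x y"
    then have "K * norm (z - x) \<le> K * norm (y - x)"
      using segment_bound1 K_pos by (intro mult_left_mono) auto
    then show "norm (sD (B (\<xi> t)) z - sD (B (\<xi> t)) x) \<le> K * norm (y - x)"
      using field_deriv_lipschitz[OF assms, of z x] by linarith
  qed
  then show ?thesis by (simp add: power2_eq_square mult_ac)
qed

lemma field_deriv_time_continuous:
  assumes "t \<in> {0..T}" "e > 0"
  shows "\<exists>d>0. \<forall>s\<in>{0..T}. dist s t < d \<longrightarrow> (\<forall>z. dist (sD (B (\<xi> s)) z) (sD (B (\<xi> t)) z) < e)"
proof -
  obtain d where "d > 0" and d: "\<forall>s\<in>{0..T}. \<bar>s - t\<bar> < d \<longrightarrow> wnorm (\<xi> s - \<xi> t) < e / CB"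
    using wcont assms CB_pos unfolding wcont_def by (metis divide_pos_pos)
  have "dist (sD (B (\<xi> s)) z) (sD (B (\<xi> t)) z) < e" if "s \<in> {0..T}" "dist s t < d" for s z
  proof -
    have "CB * wnorm (\<xi> s - \<xi> t) < CB * (e / CB)"
      using d that CB_pos by (intro mult_strict_left_mono) (auto simp: dist_real_def)
    then show ?thesis
      using standing_deriv_lipschitz[OF standing, of "\<xi> s" z "\<xi> t"] CB_pos by (simp add: dist_norm)
  qed
  then show ?thesis using \<open>d > 0\<close> by blast
qed

lemma field_deriv2_time_continuous:
  assumes "t \<in> {0..T}" "e > 0"
  shows "\<exists>d>0. \<forall>s\<in>{0..T}. dist s t < d \<longrightarrow> (\<forall>z. dist (sD (sD (B (\<xi> s))) z) (sD (sD (B (\<xi> t))) z) < e)"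
proof -
  obtain d1 where "d1 > 0" and d1: "\<forall>\<xi>'. wnorm (\<xi>' - \<xi> t) < d1 \<longrightarrow> (\<forall>z. norm (sD (sD (B \<xi>')) z - sD (sD (B (\<xi> t))) z) < e)"
    using standing_deriv2_continuous[OF standing assms(2)] by blast
  obtain d2 where "d2 > 0" and d2: "\<forall>s\<in>{0..T}. \<bar>s - t\<bar> < d2 \<longrightarrow> wnorm (\<xi> s - \<xi> t) < d1"
    using wcont assms(1) \<open>d1 > 0\<close> unfolding wcont_def by blast
  show ?thesis
    using \<open>d2 > 0\<close> d1 d2 by (auto simp: dist_norm dist_real_def)
qed

lemma continuous_on_field_deriv: "continuous_on ({0..T} \<times> UNIV) (\<lambda>x. sD (B (\<xi> (fst x))) (snd x))"
  by (rule continuous_on_uniformly_in_space[OF _ field_deriv_time_continuous])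
    (use field_deriv_has_derivative in \<open>auto intro: has_derivative_continuous continuous_at_imp_continuous_on\<close>)

lemma continuous_on_field_deriv2: "continuous_on ({0..T} \<times> UNIV) (\<lambda>x. sD (sD (B (\<xi> (fst x)))) (snd x))"
  by (rule continuous_on_uniformly_in_space[OF _ field_deriv2_time_continuous])
    (use standing_Cb2[OF standing] in \<open>auto simp: Cb2_def\<close>)

lemma flow_at_0: "\<phi> 0 x = x"
  using flow unfolding is_flow_def by simp

lemma flow_has_vector_derivative:
  "t \<in> {0..T} \<Longrightarrow> ((\<lambda>s. \<phi> s x) has_vector_derivative B (\<xi> t) (\<phi> t x)) (at t within {0..T})"
  using flow unfolding is_flow_def by simp

lemma continuous_on_flow: "continuous_on {0..T} (\<lambda>s. \<phi> s x)"
  using flow_has_vector_derivative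
  by (meson continuous_on_eq_continuous_within has_vector_derivative_continuous)

lemma flow_lipschitz:
  assumes "t \<in> {0..T}"
  shows "norm (\<phi> t x - \<phi> t y) \<le> norm (x - y) * exp (K * t)"
proof (rule gronwall_linear[where f = "\<lambda>s. \<phi> s x - \<phi> s y", OF less_imp_le[OF K_pos] _ _ _ assms])
  show "((\<lambda>s. \<phi> s x - \<phi> s y) has_vector_derivative B (\<xi> s) (\<phi> s x) - B (\<xi> s) (\<phi> s y)) (at s within {0..T})"
    if "s \<in> {0..T}" for s
    using that by (intro derivative_intros flow_has_vector_derivative)
qed (simp_all add: flow_at_0 field_lipschitz)

lemma flow_lipschitz_exp_KT:
  assumes "t \<in> {0..T}"
  shows "norm (\<phi> t x - \<phi> t y) \<le> exp (K * T) * norm (x - y)"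
  using flow_lipschitz[OF assms, of x y] mult_left_mono[OF exp_K_le[OF assms] norm_ge_zero[of "x - y"]]
  by (simp add: mult.commute)

lemma continuous_on_field_deriv_along: "continuous_on {0..T} p \<Longrightarrow> continuous_on {0..T} (\<lambda>t. sD (B (\<xi> t)) (p t))"
  by (rule continuous_on_along_path[OF continuous_on_field_deriv])

lemma continuous_on_field_deriv2_along: "continuous_on {0..T} p \<Longrightarrow> continuous_on {0..T} (\<lambda>t. sD (sD (B (\<xi> t))) (p t))"
  by (rule continuous_on_along_path[OF continuous_on_field_deriv2])

lemma norm_field_deriv_compose_le: "t \<in> {0..T} \<Longrightarrow> norm (sD (B (\<xi> t)) z o\<^sub>L Z) \<le> K * norm Z"
  by (rule norm_blinfun_compose_le[OF norm_field_deriv_le order_refl])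

lemma variational_solution_exists:
  "\<exists>J. J 0 = id_blinfun \<and> (\<forall>t\<in>{0..T}. (J has_vector_derivative sD (B (\<xi> t)) (\<phi> t x) o\<^sub>L J t) (at t within {0..T}))"
  using linear_ode_exists[where L = "\<lambda>t Z. sD (B (\<xi> t)) (\<phi> t x) o\<^sub>L Z" and c = "\<lambda>t. 0" and M = K,
      OF bounded_linear.linear[OF blinfun_compose.bounded_linear_right] less_imp_le[OF K_pos] norm_field_deriv_compose_le
      blinfun_compose.continuous_on[OF continuous_on_field_deriv_along[OF continuous_on_flow]]
      continuous_on_const less_imp_le[OF T_pos]]
  by simp

definition Jac :: "'a \<Rightarrow> real \<Rightarrow> 'a \<Rightarrow>\<^sub>L 'a" where
  "Jac x = (SOME J. J 0 = id_blinfun \<and>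
     (\<forall>t\<in>{0..T}. (J has_vector_derivative sD (B (\<xi> t)) (\<phi> t x) o\<^sub>L J t) (at t within {0..T})))"

lemma Jac_at_0: "Jac x 0 = id_blinfun"
  using someI_ex[OF variational_solution_exists[of x]] unfolding Jac_def by blast

lemma Jac_has_vector_derivative:
  "t \<in> {0..T} \<Longrightarrow> (Jac x has_vector_derivative sD (B (\<xi> t)) (\<phi> t x) o\<^sub>L Jac x t) (at t within {0..T})"
  using someI_ex[OF variational_solution_exists[of x]] unfolding Jac_def by blast

lemma continuous_on_Jac: "continuous_on {0..T} (Jac x)"
  using Jac_has_vector_derivative
  by (meson continuous_on_eq_continuous_within has_vector_derivative_continuous)

lemma norm_Jac_le:
  assumes "t \<in> {0..T}"
  shows "norm (Jac x t) \<le> exp (K * t)"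
  using gronwall_linear[where f = "Jac x" and c = 1, OF less_imp_le[OF K_pos] Jac_has_vector_derivative _
      norm_field_deriv_compose_le assms]
  by (simp add: Jac_at_0 norm_blinfun_id_le)

lemma norm_Jac_le_exp_KT: "t \<in> {0..T} \<Longrightarrow> norm (Jac x t) \<le> exp (K * T)"
  using norm_Jac_le[of t x] exp_K_le[of t] by linarith

lemma flow_linearization:
  assumes "t \<in> {0..T}"
  shows "norm (\<phi> t y - \<phi> t x - Jac x t (y - x)) \<le> K * (exp (K * T) * norm (y - x))^2 * T * exp (K * T)"
proof -
  define \<beta> where "\<beta> = K * (exp (K * T) * norm (y - x))^2"
  have "0 \<le> \<beta>" unfolding \<beta>_def using K_pos by simp
  have "norm (\<phi> t y - \<phi> t x - Jac x t (y - x)) \<le> \<beta> * t * exp (K * t)"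
  proof (rule gronwall_affine[where f = "\<lambda>s. \<phi> s y - \<phi> s x - Jac x s (y - x)",
        OF less_imp_le[OF K_pos] \<open>0 \<le> \<beta>\<close> _ _ _ assms])
    fix s assume s: "s \<in> {0..T}"
    then show "((\<lambda>s. \<phi> s y - \<phi> s x - Jac x s (y - x)) has_vector_derivative
        B (\<xi> s) (\<phi> s y) - B (\<xi> s) (\<phi> s x) - (sD (B (\<xi> s)) (\<phi> s x) o\<^sub>L Jac x s) (y - x)) (at s within {0..T})"
      by (intro derivative_intros flow_has_vector_derivative has_vector_derivative_blinfun_apply
          Jac_has_vector_derivative)
    define \<Delta> where "\<Delta> = \<phi> s y - \<phi> s x"
    have split: "B (\<xi> s) (\<phi> s y) - B (\<xi> s) (\<phi> s x) - (sD (B (\<xi> s)) (\<phi> s x) o\<^sub>L Jac x s) (y - x)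
      = (B (\<xi> s) (\<phi> s y) - B (\<xi> s) (\<phi> s x) - sD (B (\<xi> s)) (\<phi> s x) \<Delta>)
        + sD (B (\<xi> s)) (\<phi> s x) (\<phi> s y - \<phi> s x - Jac x s (y - x))"
      unfolding \<Delta>_def by (simp add: blinfun.bilinear_simps)
    have "K * norm \<Delta>^2 \<le> \<beta>"
      unfolding \<beta>_def \<Delta>_def using flow_lipschitz_exp_KT[OF s, of y x] K_pos
      by (intro mult_left_mono power_mono) auto
    then have "norm (B (\<xi> s) (\<phi> s y) - B (\<xi> s) (\<phi> s x) - sD (B (\<xi> s)) (\<phi> s x) \<Delta>) \<le> \<beta>"
      using field_linearization[OF s, of "\<phi> s y" "\<phi> s x"] unfolding \<Delta>_def by linarith
    then show "norm (B (\<xi> s) (\<phi> s y) - B (\<xi> s) (\<phi> s x) - (sD (B (\<xi> s)) (\<phi> s x) o\<^sub>L Jac x s) (y - x))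
        \<le> K * norm (\<phi> s y - \<phi> s x - Jac x s (y - x)) + \<beta>"
      unfolding split
      using norm_blinfun_apply_le[OF norm_field_deriv_le[OF s], of "\<phi> s x" "\<phi> s y - \<phi> s x - Jac x s (y - x)"]
        norm_triangle_ineq[of "B (\<xi> s) (\<phi> s y) - B (\<xi> s) (\<phi> s x) - sD (B (\<xi> s)) (\<phi> s x) \<Delta>"
          "sD (B (\<xi> s)) (\<phi> s x) (\<phi> s y - \<phi> s x - Jac x s (y - x))"]
      by linarith
  qed (simp add: flow_at_0 Jac_at_0)
  also have "\<dots> \<le> \<beta> * T * exp (K * T)"
    using assms \<open>0 \<le> \<beta>\<close> exp_K_le[OF assms] by (intro mult_mono mult_left_mono) auto
  finally show ?thesis unfolding \<beta>_def .
qed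

lemma flow_has_derivative:
  assumes "t \<in> {0..T}"
  shows "(\<phi> t has_derivative blinfun_apply (Jac x t)) (at x)"
proof (rule has_derivative_of_quadratic_remainder[OF blinfun.bounded_linear_right])
  fix y
  show "norm (\<phi> t y - \<phi> t x - Jac x t (y - x)) \<le> (K * exp (K * T)^2 * T * exp (K * T)) * norm (y - x)^2"
    using flow_linearization[OF assms, of y x] by (simp add: power_mult_distrib algebra_simps)
qed

lemma sD_flow: "t \<in> {0..T} \<Longrightarrow> sD (\<phi> t) x = Jac x t"
  by (rule sD_eqI[OF flow_has_derivative])

lemma Jac_lipschitz:
  assumes "t \<in> {0..T}"
  shows "norm (Jac y t - Jac x t) \<le> norm (y - x) * (exp (K * t) * (exp (K * t) - 1))"
proof (rule gronwall_exp_source[where f = "\<lambda>s. Jac y s - Jac x s", OF less_imp_le[OF K_pos] _ _ _ assms])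
  fix s assume s: "s \<in> {0..T}"
  then show "((\<lambda>s. Jac y s - Jac x s) has_vector_derivative
      (sD (B (\<xi> s)) (\<phi> s y) o\<^sub>L Jac y s) - (sD (B (\<xi> s)) (\<phi> s x) o\<^sub>L Jac x s)) (at s within {0..T})"
    by (intro has_vector_derivative_diff Jac_has_vector_derivative)
  have split: "(sD (B (\<xi> s)) (\<phi> s y) o\<^sub>L Jac y s) - (sD (B (\<xi> s)) (\<phi> s x) o\<^sub>L Jac x s)
     = (sD (B (\<xi> s)) (\<phi> s x) o\<^sub>L (Jac y s - Jac x s))
       + ((sD (B (\<xi> s)) (\<phi> s y) - sD (B (\<xi> s)) (\<phi> s x)) o\<^sub>L Jac y s)"
    by (simp add: blinfun_compose.diff_left blinfun_compose.diff_right)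
  have "norm (sD (B (\<xi> s)) (\<phi> s y) - sD (B (\<xi> s)) (\<phi> s x)) \<le> K * (norm (y - x) * exp (K * s))"
    by (rule order_trans[OF field_deriv_lipschitz[OF s]
          mult_left_mono[OF flow_lipschitz[OF s] less_imp_le[OF K_pos]]])
  then have "norm ((sD (B (\<xi> s)) (\<phi> s y) - sD (B (\<xi> s)) (\<phi> s x)) o\<^sub>L Jac y s)
      \<le> K * (norm (y - x) * exp (K * s)) * exp (K * s)"
    using norm_Jac_le[OF s] by (rule norm_blinfun_compose_le)
  also have "\<dots> = norm (y - x) * (K * exp (2 * K * s))"
    by (simp add: algebra_simps flip: exp_add)
  finally show "norm ((sD (B (\<xi> s)) (\<phi> s y) o\<^sub>L Jac y s) - (sD (B (\<xi> s)) (\<phi> s x) o\<^sub>L Jac x s))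
      \<le> K * norm (Jac y s - Jac x s) + norm (y - x) * (K * exp (2 * K * s))"
    unfolding split using norm_field_deriv_compose_le[OF s, of "\<phi> s x" "Jac y s - Jac x s"]
      norm_triangle_ineq[of "sD (B (\<xi> s)) (\<phi> s x) o\<^sub>L (Jac y s - Jac x s)"
        "(sD (B (\<xi> s)) (\<phi> s y) - sD (B (\<xi> s)) (\<phi> s x)) o\<^sub>L Jac y s"]
    by linarith
qed (simp add: Jac_at_0)

definition hess_source :: "'a \<Rightarrow> real \<Rightarrow> 'a \<Rightarrow>\<^sub>L 'a \<Rightarrow>\<^sub>L 'a" where
  "hess_source y t = blinfun_compose.prod_left (Jac y t) o\<^sub>L sD (sD (B (\<xi> t))) (\<phi> t y) o\<^sub>L Jac y t"

lemma hess_source_apply: "hess_source y t h = sD (sD (B (\<xi> t))) (\<phi> t y) (Jac y t h) o\<^sub>L Jac y t"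
  unfolding hess_source_def by simp

lemma second_variational_solution_exists:
  "\<exists>H. H 0 = 0 \<and> (\<forall>t\<in>{0..T}. (H has_vector_derivative
      (blinfun_compose.prod_right (sD (B (\<xi> t)) (\<phi> t y)) o\<^sub>L H t) + hess_source y t) (at t within {0..T}))"
proof -
  let ?A = "\<lambda>t. blinfun_compose.prod_right (sD (B (\<xi> t)) (\<phi> t y)) :: ('a \<Rightarrow>\<^sub>L 'a) \<Rightarrow>\<^sub>L ('a \<Rightarrow>\<^sub>L 'a)"
  have "norm (?A t o\<^sub>L H) \<le> K * norm H" if "t \<in> {0..T}" for t and H :: "'a \<Rightarrow>\<^sub>L 'a \<Rightarrow>\<^sub>L 'a"
    using order_trans[OF norm_blinfun_compose_prod_right_le norm_field_deriv_le[OF that]]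
    by (rule norm_blinfun_compose_le) simp
  moreover have "continuous_on {0..T} ?A"
    by (rule blinfun_compose.bounded_linear_prod_right[THEN bounded_linear.continuous_on,
          OF continuous_on_field_deriv_along[OF continuous_on_flow]])
  moreover have "continuous_on {0..T} (hess_source y)"
    unfolding hess_source_def
    by (intro blinfun_compose.continuous_on continuous_on_Jac continuous_on_field_deriv2_along continuous_on_flow
        blinfun_compose.bounded_linear_prod_left[THEN bounded_linear.continuous_on])
  ultimately show ?thesis
    using linear_ode_exists[where L = "\<lambda>t H. ?A t o\<^sub>L H" and c = "hess_source y" and M = K,
        OF bounded_linear.linear[OF blinfun_compose.bounded_linear_right] less_imp_le[OF K_pos] _
        blinfun_compose.continuous_on _ less_imp_le[OF T_pos]]
    by simp
qed

definition Hess :: "'a \<Rightarrow> real \<Rightarrow> 'a \<Rightarrow>\<^sub>L 'a \<Rightarrow>\<^sub>L 'a" where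
  "Hess y = (SOME H. H 0 = 0 \<and> (\<forall>t\<in>{0..T}. (H has_vector_derivative
      (blinfun_compose.prod_right (sD (B (\<xi> t)) (\<phi> t y)) o\<^sub>L H t) + hess_source y t) (at t within {0..T})))"

lemma Hess_at_0: "Hess y 0 = 0"
  using someI_ex[OF second_variational_solution_exists[of y]] unfolding Hess_def by blast

lemma Hess_has_vector_derivative:
  "t \<in> {0..T} \<Longrightarrow> (Hess y has_vector_derivative
     (blinfun_compose.prod_right (sD (B (\<xi> t)) (\<phi> t y)) o\<^sub>L Hess y t) + hess_source y t) (at t within {0..T})"
  using someI_ex[OF second_variational_solution_exists[of y]] unfolding Hess_def by blast

lemma field_deriv_linearization:
  assumes "s \<in> {0..T}"
    and modulus: "\<And>z. norm (z - a) \<le> norm (b - a) \<Longrightarrow> norm (sD (sD (B (\<xi> s))) z - sD (sD (B (\<xi> s))) a) \<le> \<omega>"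
  shows "norm (sD (B (\<xi> s)) b - sD (B (\<xi> s)) a - sD (sD (B (\<xi> s))) a (b - a)) \<le> norm (b - a) * \<omega>"
  using modulus segment_bound1 by (intro linearization_le[OF field_deriv_has_derivative]) blast

lemma Jac_remainder_deriv_le:
  assumes s: "s \<in> {0..T}"
    and modulus: "\<And>z. norm (z - \<phi> s x) \<le> exp (K * T) * norm (y - x) \<Longrightarrow>
      norm (sD (sD (B (\<xi> s))) z - sD (sD (B (\<xi> s))) (\<phi> s x)) \<le> \<omega>"
  defines "E \<equiv> exp (K * T)" and "h \<equiv> y - x"
  shows "norm ((sD (B (\<xi> s)) (\<phi> s y) o\<^sub>L Jac y s) - (sD (B (\<xi> s)) (\<phi> s x) o\<^sub>L Jac x s)
      - ((blinfun_compose.prod_right (sD (B (\<xi> s)) (\<phi> s x)) o\<^sub>L Hess x s) + hess_source x s) h)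
    \<le> K * norm (Jac y s - Jac x s - Hess x s h)
      + (E^2 * \<omega> * norm h + (K * K * E^4 * T + K * E^3) * norm h^2)"
proof -
  define A A' J J' D H \<Delta> where "A = sD (B (\<xi> s)) (\<phi> s x)" and "A' = sD (B (\<xi> s)) (\<phi> s y)"
    and "J = Jac x s" and "J' = Jac y s" and "D = sD (sD (B (\<xi> s))) (\<phi> s x)" and "H = Hess x s h"
    and "\<Delta> = \<phi> s y - \<phi> s x"
  have "0 \<le> \<omega>" using modulus[of "\<phi> s x"] by simp
  have "1 \<le> E" unfolding E_def using K_pos T_pos by simp
  have JE: "norm J' \<le> E" "norm J \<le> E" unfolding J_def J'_def E_def using norm_Jac_le_exp_KT[OF s] by auto
  have \<Delta>: "norm \<Delta> \<le> E * norm h" unfolding \<Delta>_def h_def E_def by (rule flow_lipschitz_exp_KT[OF s])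
  have "norm (A' - A - D \<Delta>) \<le> norm \<Delta> * \<omega>"
    unfolding A'_def A_def D_def \<Delta>_def using \<Delta> modulus unfolding \<Delta>_def h_def E_def
    by (intro field_deriv_linearization[OF s]) auto
  also have "\<dots> \<le> E * norm h * \<omega>"
    using \<Delta> \<open>0 \<le> \<omega>\<close> by (rule mult_right_mono)
  finally have deriv_error: "norm ((A' - A - D \<Delta>) o\<^sub>L J') \<le> (E * norm h * \<omega>) * E"
    by (rule norm_blinfun_compose_le[OF _ JE(1)])
  have flow_error: "norm (D (\<Delta> - J h) o\<^sub>L J') \<le> (K * (K * (E * norm h)^2 * T * E)) * E"
  proof (rule norm_blinfun_compose_le[OF _ JE(1)])
    have "norm (\<Delta> - J h) \<le> K * (E * norm h)^2 * T * E"
      using flow_linearization[OF s, of y x] unfolding \<Delta>_def J_def h_def E_def by simp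
    then show "norm (D (\<Delta> - J h)) \<le> K * (K * (E * norm h)^2 * T * E)"
      unfolding D_def by (rule order_trans[OF norm_blinfun_apply_le[OF norm_field_deriv2_le[OF s]]
          mult_left_mono[OF _ less_imp_le[OF K_pos]]])
  qed
  have Jac_variation: "norm (D (J h) o\<^sub>L (J' - J)) \<le> (K * (E * norm h)) * (norm h * (E * E))"
  proof (rule norm_blinfun_compose_le)
    have "norm (J h) \<le> E * norm h" by (rule norm_blinfun_apply_le[OF JE(2)])
    then show "norm (D (J h)) \<le> K * (E * norm h)"
      unfolding D_def by (rule order_trans[OF norm_blinfun_apply_le[OF norm_field_deriv2_le[OF s]]
          mult_left_mono[OF _ less_imp_le[OF K_pos]]])
    have "exp (K * s) \<le> E" "0 \<le> K * s"
      using exp_K_le[OF s] K_pos s unfolding E_def by auto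
    then have "exp (K * s) * (exp (K * s) - 1) \<le> E * E" using \<open>1 \<le> E\<close> by (intro mult_mono) auto
    then show "norm (J' - J) \<le> norm h * (E * E)"
      unfolding J'_def J_def h_def by (rule order_trans[OF Jac_lipschitz[OF s] mult_left_mono[OF _ norm_ge_zero]])
  qed
  have linear_part: "norm (A o\<^sub>L (J' - J - H)) \<le> K * norm (J' - J - H)"
    unfolding A_def by (rule norm_field_deriv_compose_le[OF s])
  have sum: "(E * norm h * \<omega>) * E + (K * (K * (E * norm h)^2 * T * E)) * E + (K * (E * norm h)) * (norm h * (E * E))
      = E^2 * \<omega> * norm h + (K * K * E^4 * T + K * E^3) * norm h^2"
    by (simp add: power2_eq_square power3_eq_cube power4_eq_xxxx algebra_simps)
  txt \<open>The derivative of the remainder is \<open>A\<close> applied to the remainder plus three source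
    terms: the linearization error of \<open>DB\<close>, that of the flow, and the variation of \<open>J\<close>.\<close>
  have "((blinfun_compose.prod_right A o\<^sub>L Hess x s) + hess_source x s) h = (A o\<^sub>L H) + (D (J h) o\<^sub>L J)"
    unfolding H_def D_def J_def A_def by (simp add: blinfun.add_left hess_source_apply)
  then have split: "(A' o\<^sub>L J') - (A o\<^sub>L J) - ((blinfun_compose.prod_right A o\<^sub>L Hess x s) + hess_source x s) h
      = (A o\<^sub>L (J' - J - H)) + ((A' - A - D \<Delta>) o\<^sub>L J') + (D (\<Delta> - J h) o\<^sub>L J') + (D (J h) o\<^sub>L (J' - J))"
    by (simp only: blinfun_compose_second_order_split)
  have triangle4: "norm (a + b + c + e) \<le> norm a + norm b + norm c + norm e" for a b c e :: "'a \<Rightarrow>\<^sub>L 'a"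
    using norm_triangle_ineq[of "a + b + c" e] norm_triangle_ineq[of "a + b" c] norm_triangle_ineq[of a b]
    by linarith
  show ?thesis
    unfolding A_def [symmetric] A'_def [symmetric] J_def [symmetric] J'_def [symmetric] H_def [symmetric] split
    using triangle4[of "A o\<^sub>L (J' - J - H)" "(A' - A - D \<Delta>) o\<^sub>L J'" "D (\<Delta> - J h) o\<^sub>L J'" "D (J h) o\<^sub>L (J' - J)"]
      linear_part deriv_error flow_error Jac_variation sum
    by linarith
qed

lemma Jac_remainder_le:
  assumes t: "t \<in> {0..T}"
    and modulus: "\<And>s z. s \<in> {0..T} \<Longrightarrow> norm (z - \<phi> s x) \<le> exp (K * T) * norm (y - x) \<Longrightarrow>
      norm (sD (sD (B (\<xi> s))) z - sD (sD (B (\<xi> s))) (\<phi> s x)) \<le> \<omega>"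
  defines "E \<equiv> exp (K * T)"
  shows "norm (Jac y t - Jac x t - Hess x t (y - x))
    \<le> (E^2 * \<omega> * norm (y - x) + (K * K * E^4 * T + K * E^3) * norm (y - x)^2) * T * E"
proof -
  define \<beta> where "\<beta> = E^2 * \<omega> * norm (y - x) + (K * K * E^4 * T + K * E^3) * norm (y - x)^2"
  have "0 \<le> \<omega>" using modulus[of 0 "\<phi> 0 x"] T_pos by simp
  then have "0 \<le> \<beta>" unfolding \<beta>_def E_def using K_pos T_pos by simp
  have "norm (Jac y t - Jac x t - Hess x t (y - x)) \<le> \<beta> * t * exp (K * t)"
  proof (rule gronwall_affine[where f = "\<lambda>s. Jac y s - Jac x s - Hess x s (y - x)",
        OF less_imp_le[OF K_pos] \<open>0 \<le> \<beta>\<close> _ _ _ t])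
    fix s assume s: "s \<in> {0..T}"
    show "((\<lambda>s. Jac y s - Jac x s - Hess x s (y - x)) has_vector_derivative
        (sD (B (\<xi> s)) (\<phi> s y) o\<^sub>L Jac y s) - (sD (B (\<xi> s)) (\<phi> s x) o\<^sub>L Jac x s)
        - ((blinfun_compose.prod_right (sD (B (\<xi> s)) (\<phi> s x)) o\<^sub>L Hess x s) + hess_source x s) (y - x))
        (at s within {0..T})"
      using s by (intro has_vector_derivative_diff Jac_has_vector_derivative
          has_vector_derivative_blinfun_apply Hess_has_vector_derivative)
    show "norm ((sD (B (\<xi> s)) (\<phi> s y) o\<^sub>L Jac y s) - (sD (B (\<xi> s)) (\<phi> s x) o\<^sub>L Jac x s)
        - ((blinfun_compose.prod_right (sD (B (\<xi> s)) (\<phi> s x)) o\<^sub>L Hess x s) + hess_source x s) (y - x))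
        \<le> K * norm (Jac y s - Jac x s - Hess x s (y - x)) + \<beta>"
      unfolding \<beta>_def E_def using modulus[OF s] by (rule Jac_remainder_deriv_le[OF s])
  qed (simp add: Jac_at_0 Hess_at_0)
  also have "\<dots> \<le> \<beta> * T * E"
    using t \<open>0 \<le> \<beta>\<close> exp_K_le[OF t] unfolding E_def by (intro mult_mono mult_left_mono) auto
  finally show ?thesis unfolding \<beta>_def .
qed

lemma Jac_has_derivative:
  assumes t: "t \<in> {0..T}"
  shows "((\<lambda>y. Jac y t) has_derivative blinfun_apply (Hess x t)) (at x)"
  unfolding has_derivative_at_alt
proof (intro conjI allI impI blinfun.bounded_linear_right)
  fix \<epsilon> :: real assume "\<epsilon> > 0"
  define E where "E = exp (K * T)"
  define C where "C = K * K * E^4 * T + K * E^3"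
  have "1 \<le> E" "0 \<le> C" unfolding C_def E_def using K_pos T_pos by auto
  define \<omega> where "\<omega> = \<epsilon> / (2 * T * E^3)"
  have "\<omega> > 0" unfolding \<omega>_def using \<open>\<epsilon> > 0\<close> T_pos \<open>1 \<le> E\<close> by simp
  obtain \<delta> where "\<delta> > 0" and \<delta>: "\<forall>s\<in>{0..T}. \<forall>z. norm (z - \<phi> s x) < \<delta> \<longrightarrow>
      norm (sD (sD (B (\<xi> s))) z - sD (sD (B (\<xi> s))) (\<phi> s x)) < \<omega>"
    using uniform_modulus_along_path[OF compact_Icc continuous_on_field_deriv2 continuous_on_flow \<open>\<omega> > 0\<close>]
    by blast
  define d where "d = min (\<delta> / E) (\<epsilon> / (2 * T * E * C + 1))"
  have "0 < 2 * T * E * C + 1" using T_pos \<open>1 \<le> E\<close> \<open>0 \<le> C\<close> by (simp add: add_nonneg_pos)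
  then have "d > 0" unfolding d_def using \<open>\<delta> > 0\<close> \<open>1 \<le> E\<close> \<open>\<epsilon> > 0\<close> by simp
  show "\<exists>d>0. \<forall>y. norm (y - x) < d \<longrightarrow> norm (Jac y t - Jac x t - Hess x t (y - x)) \<le> \<epsilon> * norm (y - x)"
  proof (intro exI[of _ d] conjI allI impI \<open>d > 0\<close>)
    fix y assume "norm (y - x) < d"
    then have "E * norm (y - x) < \<delta>"
      using \<open>1 \<le> E\<close> unfolding d_def by (simp add: field_simps)
    then have "norm (Jac y t - Jac x t - Hess x t (y - x))
        \<le> (E^2 * \<omega> * norm (y - x) + C * norm (y - x)^2) * T * E"
      unfolding C_def E_def using \<delta> by (intro Jac_remainder_le[OF t] less_imp_le) auto
    also have "\<dots> = (T * E^3 * \<omega>) * norm (y - x) + (T * E * C * norm (y - x)) * norm (y - x)"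
      by (simp add: power2_eq_square power3_eq_cube algebra_simps)
    also have "\<dots> \<le> (\<epsilon> / 2) * norm (y - x) + (\<epsilon> / 2) * norm (y - x)"
    proof (rule add_mono)
      show "(T * E^3 * \<omega>) * norm (y - x) \<le> (\<epsilon> / 2) * norm (y - x)"
        unfolding \<omega>_def using T_pos \<open>1 \<le> E\<close> by simp
      have "(2 * T * E * C + 1) * norm (y - x) < \<epsilon>"
        using \<open>norm (y - x) < d\<close> \<open>0 < 2 * T * E * C + 1\<close> unfolding d_def by (simp add: field_simps)
      moreover have "(2 * T * E * C + 1) * norm (y - x) = 2 * (T * E * C * norm (y - x)) + norm (y - x)"
        by (simp add: algebra_simps)
      ultimately have "2 * (T * E * C * norm (y - x)) \<le> \<epsilon>"
        using norm_ge_zero[of "y - x"] by linarith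
      then show "(T * E * C * norm (y - x)) * norm (y - x) \<le> (\<epsilon> / 2) * norm (y - x)"
        by (intro mult_right_mono) auto
    qed
    finally show "norm (Jac y t - Jac x t - Hess x t (y - x)) \<le> \<epsilon> * norm (y - x)" by simp
  qed
qed

lemma flow_differentiable: "t \<in> {0..T} \<Longrightarrow> \<phi> t differentiable (at x)"
  using flow_has_derivative unfolding differentiable_def by blast

lemma sD_flow_eq_Jac: "t \<in> {0..T} \<Longrightarrow> sD (\<phi> t) = (\<lambda>y. Jac y t)"
  using sD_flow by blast

lemma sD_flow_differentiable: "t \<in> {0..T} \<Longrightarrow> sD (\<phi> t) differentiable (at x)"
  using Jac_has_derivative unfolding sD_flow_eq_Jac differentiable_def by blast

lemma norm_sD_flow_le: "t \<in> {0..T} \<Longrightarrow> norm (sD (\<phi> t) x) \<le> exp (CB * T * (normT T \<xi> + 1))"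
  using norm_Jac_le_exp_KT unfolding sD_flow_eq_Jac K_def by (simp add: ac_simps)

lemma sD_flow_lipschitz:
  assumes "t \<in> {0..T}"
  shows "norm (sD (\<phi> t) x - sD (\<phi> t) y)
    \<le> CB * T * (normT T \<xi> + 1) * exp (CB * (2 * T + 1) * (normT T \<xi> + 1)) * norm (x - y)"
proof -
  have "0 \<le> K * t" "K * t \<le> K * T" using assms K_pos by auto
  have "exp (K * t) - 1 \<le> K * T * exp (K * T)"
    using exp_minus_one_le[OF \<open>0 \<le> K * t\<close>] mult_mono[OF \<open>K * t \<le> K * T\<close> exp_K_le[OF assms]]
      \<open>0 \<le> K * t\<close> \<open>K * t \<le> K * T\<close> by auto
  then have "exp (K * t) * (exp (K * t) - 1) \<le> exp (K * T) * (K * T * exp (K * T))"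
    using exp_K_le[OF assms] \<open>0 \<le> K * t\<close> by (intro mult_mono) auto
  also have "\<dots> = K * T * exp (K * (2 * T))"
    by (simp add: algebra_simps flip: exp_add)
  also have "\<dots> \<le> K * T * exp (K * (2 * T + 1))"
    using K_pos T_pos by (intro mult_left_mono) auto
  finally have "norm (x - y) * (exp (K * t) * (exp (K * t) - 1)) \<le> norm (x - y) * (K * T * exp (K * (2 * T + 1)))"
    by (rule mult_left_mono) simp
  then show ?thesis
    using Jac_lipschitz[OF assms, of x y] unfolding sD_flow_eq_Jac[OF assms] K_def
    by (simp add: ac_simps)
qed

end

section \<open>Comparison of two flows\<close>

locale field_flow_pair = a: field_flow B CB T \<xi> \<phi> + b: field_flow B CB T \<xi>' \<phi>'
  for B :: "'a::euclidean_space meas \<Rightarrow> 'a \<Rightarrow> 'a" and CB T \<xi> \<phi> \<xi>' \<phi>'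
begin

definition dist_T :: real where "dist_T = normT T (\<lambda>s. \<xi> s - \<xi>' s)"

lemma wnorm_diff_le_dist_T: "s \<in> {0..T} \<Longrightarrow> wnorm (\<xi> s - \<xi>' s) \<le> dist_T"
  unfolding dist_T_def using wnorm_le_normT[OF wcont_diff[OF a.wcont b.wcont]] by simp

lemma dist_T_nonneg: "0 \<le> dist_T"
  using wnorm_diff_le_dist_T[of 0] wnorm_nonneg[of "\<xi> 0 - \<xi>' 0"] a.T_pos by simp

lemma flow_difference:
  assumes "t \<in> {0..T}"
  shows "norm (\<phi> t x - \<phi>' t x) \<le> CB * dist_T * T * exp (a.K * T)"
proof -
  have "0 \<le> CB * dist_T" using a.CB_pos dist_T_nonneg by simp
  have "norm (\<phi> t x - \<phi>' t x) \<le> CB * dist_T * t * exp (a.K * t)"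
  proof (rule gronwall_affine[where f = "\<lambda>s. \<phi> s x - \<phi>' s x",
        OF less_imp_le[OF a.K_pos] \<open>0 \<le> CB * dist_T\<close> _ _ _ assms])
    fix s assume s: "s \<in> {0..T}"
    then show "((\<lambda>s. \<phi> s x - \<phi>' s x) has_vector_derivative B (\<xi> s) (\<phi> s x) - B (\<xi>' s) (\<phi>' s x))
        (at s within {0..T})"
      by (intro derivative_intros a.flow_has_vector_derivative b.flow_has_vector_derivative)
    have "norm (B (\<xi> s) (\<phi>' s x) - B (\<xi>' s) (\<phi>' s x)) \<le> CB * dist_T"
      using standing_field_lipschitz[OF a.standing] mult_left_mono[OF wnorm_diff_le_dist_T[OF s]] a.CB_pos
      by (meson less_imp_le order_trans)
    then show "norm (B (\<xi> s) (\<phi> s x) - B (\<xi>' s) (\<phi>' s x)) \<le> a.K * norm (\<phi> s x - \<phi>' s x) + CB * dist_T"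
      using a.field_lipschitz[OF s, of "\<phi> s x" "\<phi>' s x"]
        norm_triangle_ineq[of "B (\<xi> s) (\<phi> s x) - B (\<xi> s) (\<phi>' s x)" "B (\<xi> s) (\<phi>' s x) - B (\<xi>' s) (\<phi>' s x)"]
      by simp
  qed (simp add: a.flow_at_0 b.flow_at_0)
  also have "\<dots> \<le> CB * dist_T * T * exp (a.K * T)"
    using assms \<open>0 \<le> CB * dist_T\<close> a.exp_K_le[OF assms] by (intro mult_mono mult_left_mono) auto
  finally show ?thesis .
qed

lemma Jac_difference:
  assumes "t \<in> {0..T}"
  shows "norm (a.Jac x t - b.Jac x t)
    \<le> (a.K * (CB * dist_T * T * exp (a.K * T)) + CB * dist_T) * exp (b.K * T) * T * exp (a.K * T)"
proof -
  define \<beta> where "\<beta> = (a.K * (CB * dist_T * T * exp (a.K * T)) + CB * dist_T) * exp (b.K * T)"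
  have "0 \<le> \<beta>" unfolding \<beta>_def using a.CB_pos dist_T_nonneg a.K_pos a.T_pos by simp
  have "norm (a.Jac x t - b.Jac x t) \<le> \<beta> * t * exp (a.K * t)"
  proof (rule gronwall_affine[where f = "\<lambda>s. a.Jac x s - b.Jac x s",
        OF less_imp_le[OF a.K_pos] \<open>0 \<le> \<beta>\<close> _ _ _ assms])
    fix s assume s: "s \<in> {0..T}"
    then show "((\<lambda>s. a.Jac x s - b.Jac x s) has_vector_derivative
       (sD (B (\<xi> s)) (\<phi> s x) o\<^sub>L a.Jac x s) - (sD (B (\<xi>' s)) (\<phi>' s x) o\<^sub>L b.Jac x s)) (at s within {0..T})"
      by (intro has_vector_derivative_diff a.Jac_has_vector_derivative b.Jac_has_vector_derivative)
    define A A1 A2 J J' where "A = sD (B (\<xi> s)) (\<phi> s x)" and "A1 = sD (B (\<xi> s)) (\<phi>' s x)"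
      and "A2 = sD (B (\<xi>' s)) (\<phi>' s x)" and "J = a.Jac x s" and "J' = b.Jac x s"
    have split: "(A o\<^sub>L J) - (A2 o\<^sub>L J') = (A o\<^sub>L (J - J')) + ((A - A1) o\<^sub>L J') + ((A1 - A2) o\<^sub>L J')"
      by (simp add: blinfun_compose.diff_left blinfun_compose.diff_right)
    have J': "norm J' \<le> exp (b.K * T)" unfolding J'_def by (rule b.norm_Jac_le_exp_KT[OF s])
    have "norm (A - A1) \<le> a.K * (CB * dist_T * T * exp (a.K * T))"
      unfolding A_def A1_def
      by (rule order_trans[OF a.field_deriv_lipschitz[OF s] mult_left_mono[OF flow_difference[OF s]
            less_imp_le[OF a.K_pos]]])
    then have "norm ((A - A1) o\<^sub>L J') \<le> a.K * (CB * dist_T * T * exp (a.K * T)) * exp (b.K * T)"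
      using J' by (rule norm_blinfun_compose_le)
    moreover have "norm (A1 - A2) \<le> CB * dist_T"
      unfolding A1_def A2_def
      by (rule order_trans[OF standing_deriv_lipschitz[OF a.standing] mult_left_mono[OF wnorm_diff_le_dist_T[OF s]
            less_imp_le[OF a.CB_pos]]])
    then have "norm ((A1 - A2) o\<^sub>L J') \<le> CB * dist_T * exp (b.K * T)"
      using J' by (rule norm_blinfun_compose_le)
    moreover have "norm (A o\<^sub>L (J - J')) \<le> a.K * norm (J - J')"
      unfolding A_def by (rule a.norm_field_deriv_compose_le[OF s])
    ultimately have "norm ((A o\<^sub>L J) - (A2 o\<^sub>L J')) \<le> a.K * norm (J - J') + \<beta>"
      unfolding split \<beta>_def
      using norm_triangle_ineq[of "(A o\<^sub>L (J - J')) + ((A - A1) o\<^sub>L J')" "(A1 - A2) o\<^sub>L J'"]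
        norm_triangle_ineq[of "A o\<^sub>L (J - J')" "(A - A1) o\<^sub>L J'"]
      by (simp add: algebra_simps)
    then show "norm ((sD (B (\<xi> s)) (\<phi> s x) o\<^sub>L a.Jac x s) - (sD (B (\<xi>' s)) (\<phi>' s x) o\<^sub>L b.Jac x s))
        \<le> a.K * norm (a.Jac x s - b.Jac x s) + \<beta>"
      unfolding A_def A2_def J_def J'_def .
  qed (simp add: a.Jac_at_0 b.Jac_at_0)
  also have "\<dots> \<le> \<beta> * T * exp (a.K * T)"
    using assms \<open>0 \<le> \<beta>\<close> a.exp_K_le[OF assms] by (intro mult_mono mult_left_mono) auto
  finally show ?thesis unfolding \<beta>_def .
qed

lemma flow_difference_le:
  "t \<in> {0..T} \<Longrightarrow> norm (\<phi> t x - \<phi>' t x)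
    \<le> CB * T * exp (CB * T * (normT T \<xi> + 1)) * normT T (\<lambda>s. \<xi> s - \<xi>' s)"
  using flow_difference unfolding a.K_def dist_T_def by (simp add: ac_simps)

lemma sD_flow_difference_le:
  assumes "t \<in> {0..T}"
  shows "norm (sD (\<phi> t) x - sD (\<phi>' t) x)
    \<le> CB * T * exp (CB * (T + 1) * (normT T \<xi> + normT T \<xi>' + 2))
      * (1 + CB * T * (normT T \<xi> + 1) * exp (CB * T * (normT T \<xi> + 1)))
      * normT T (\<lambda>s. \<xi> s - \<xi>' s)"
proof -
  define n n' where "n = normT T \<xi>" and "n' = normT T \<xi>'"
  have "0 \<le> n" "0 \<le> n'" unfolding n_def n'_def
    using normT_nonneg[OF a.wcont] normT_nonneg[OF b.wcont] a.T_pos by auto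
  have "exp (a.K * T) * exp (b.K * T) = exp (CB * (n + n' + 2) * T)"
    unfolding a.K_def b.K_def n_def n'_def by (simp add: algebra_simps flip: exp_add)
  also have "\<dots> \<le> exp (CB * (T + 1) * (n + n' + 2))"
    using a.CB_pos \<open>0 \<le> n\<close> \<open>0 \<le> n'\<close> by (simp add: algebra_simps)
  finally have "CB * T * (1 + CB * T * (n + 1) * exp (a.K * T)) * dist_T * (exp (a.K * T) * exp (b.K * T))
      \<le> CB * T * (1 + CB * T * (n + 1) * exp (a.K * T)) * dist_T * exp (CB * (T + 1) * (n + n' + 2))"
    using a.CB_pos a.T_pos \<open>0 \<le> n\<close> dist_T_nonneg by (intro mult_left_mono) auto
  then show ?thesis
    using Jac_difference[OF assms, of x]
    unfolding a.sD_flow_eq_Jac[OF assms] b.sD_flow_eq_Jac[OF assms]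
    unfolding a.K_def n_def n'_def dist_T_def
    by (simp add: algebra_simps)
qed

end

theorem lemma3p2:
  fixes B :: "'a::euclidean_space meas \<Rightarrow> 'a \<Rightarrow> 'a"
    and CB T :: real
    and \<xi> \<xi>' :: "real \<Rightarrow> 'a meas"
    and \<phi> \<phi>' :: "real \<Rightarrow> 'a \<Rightarrow> 'a"
  assumes "standing B CB"
    and "T > 0"
    and "wcont T \<xi>" and "wcont T \<xi>'"
    and "is_flow B T \<xi> \<phi>" and "is_flow B T \<xi>' \<phi>'"
  shows "\<forall>t\<in>{0..T}.
      (\<forall>x. \<phi> t differentiable (at x) \<and> sD (\<phi> t) differentiable (at x))
    \<and> (\<forall>x. norm (sD (\<phi> t) x) \<le> exp (CB * T * (normT T \<xi> + 1)))
    \<and> (\<forall>x. norm (\<phi> t x - \<phi>' t x)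
           \<le> CB * T * exp (CB * T * (normT T \<xi> + 1)) * normT T (\<lambda>s. \<xi> s - \<xi>' s))
    \<and> (\<forall>x. norm (sD (\<phi> t) x - sD (\<phi>' t) x)
           \<le> CB * T * exp (CB * (T + 1) * (normT T \<xi> + normT T \<xi>' + 2))
              * (1 + CB * T * (normT T \<xi> + 1) * exp (CB * T * (normT T \<xi> + 1)))
              * normT T (\<lambda>s. \<xi> s - \<xi>' s))
    \<and> (\<forall>x y. norm (sD (\<phi> t) x - sD (\<phi> t) y)
           \<le> CB * T * (normT T \<xi> + 1) * exp (CB * (2 * T + 1) * (normT T \<xi> + 1)) * norm (x - y))"
proof -
  interpret field_flow_pair B CB T \<xi> \<phi> \<xi>' \<phi>'
    using assms by unfold_locales
  show ?thesis
    by (intro ballI conjI allI a.flow_differentiable a.sD_flow_differentiable a.norm_sD_flow_le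
        flow_difference_le sD_flow_difference_le a.sD_flow_lipschitz)
qed

end
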